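(* Let $\langle X\mid R\rangle$ be an extra-confluent $N$-homogeneous presentation. Let $n\geq2$ and $m\geq l_N(n+2)$ be integers, and let $T_{n,m}=S^{(m)}_{m-l_N(n+2)+1}\wedge\cdots\wedge S^{(m)}_{m-l_N(n+1)}$. Then $T_{n,m}\vee F_2^{n-1,m}=F_2^{n,m}$.
   Context: $\mathbb{K}$ is a field, $N\geq2$, $X^{(m)}$ words of length $m$, $V=\mathbb{K}X$, $V^{\otimes m}=\mathbb{K}X^{(m)}$. $R\subset V^{\otimes N}$, $\overline R=\mathrm{span}(R)$. $X$ is totally ordered, $X^{(m)}$ lexicographically ordered, $\mathrm{lm}(f)$ greatest word in $f\neq0$. Conventions: leading coefficients in $R$ are $1$; a word is a normal form if it has no factor $\mathrm{lm}(f)$, $f\in R$; the presentation is reduced. $S\in\mathrm{End}(V^{\otimes N})$: $S(\mathrm{lm}(f))=\mathrm{lm}(f)-f$ ($f\in R$), $S(w)=w$ otherwise. $\langle t,s\rangle^k=\cdots sts$ ($k$ factors). Side-confluent: for each $1\leq m\leq N-1$ some $k$ gives $\langle\mathrm{id}_{V^{\otimes m}}\otimes S,S\otimes\mathrm{id}_{V^{\otimes m}}\rangle^k=\langle S\otimes\mathrm{id}_{V^{\otimes m}},\mathrm{id}_{V^{\otimes m}}\otimes S\rangle^k$. Extra-confluent: side-confluent, $X$ finite, and $(V^{\otimes n}\otimes\overline R)\cap(\overline R\otimes V^{\otimes n})\subset V^{\otimes n-1}\otimes\overline R\otimes V$ for $2\leq n\leq N-1$. $l_N(2k)=kN$, $l_N(2k+1)=kN+1$;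 $J_1=V$, $J_2=\overline R$, $J_n=\bigcap_{i=0}^{l_N(n)-N}V^{\otimes i}\otimes\overline R\otimes V^{\otimes l_N(n)-N-i}$ ($n\geq3$). $S_i^{(m)}=\mathrm{id}_{V^{\otimes i}}\otimes S\otimes\mathrm{id}_{V^{\otimes m-N-i}}$ for $0\leq i\leq m-N$. A reduction operator relatively to $X^{(m)}$ is a linear projector $T$ of $V^{\otimes m}$ with each $T(w)$ equal to $w$ or a combination of words $<w$; the unique one with kernel $W$ is $\theta_{X^{(m)}}^{-1}(W)$; $T_1\wedge T_2=\theta^{-1}(\ker T_1+\ker T_2)$, $T_1\vee T_2=\theta^{-1}(\ker T_1\cap\ker T_2)$ (associative). For $m\geq l_N(n)$: $F_2^{n,m}=\mathrm{id}_{V^{\otimes m}}$ if $m<l_N(n+1)$, otherwise $F_2^{n,m}=\theta_{X^{(m)}}^{-1}(V^{\otimes m-l_N(n+1)}\otimes J_{n+1})$. *)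

theory Defs
  imports Main
begin

definition words :: "'x set \<Rightarrow> nat \<Rightarrow> 'x list set" where
  "words X m = {w. set w \<subseteq> X \<and> length w = m}"

definition lex_less :: "'x::linorder list \<Rightarrow> 'x list \<Rightarrow> bool" where
  "lex_less u v \<longleftrightarrow> (u, v) \<in> lexord {(a, b). a < b}"

(* Vectors of V^{\<otimes>m} = K X^{(m)}: coefficient functions supported on X^{(m)}. *)
definition vecs :: "'x set \<Rightarrow> nat \<Rightarrow> ('x list \<Rightarrow> 'k::field) set" where
  "vecs X m = {v. \<forall>w. w \<notin> words X m \<longrightarrow> v w = 0}"

definition word_vec :: "'x list \<Rightarrow> ('x list \<Rightarrow> 'k::field)" where
  "word_vec w = (\<lambda>u. if u = w then 1 else 0)"

definition lin_span :: "('x list \<Rightarrow> 'k::field) set \<Rightarrow> ('x list \<Rightarrow> 'k) set" where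
  "lin_span S = {v. \<exists>F c. finite F \<and> F \<subseteq> S \<and> v = (\<lambda>w. \<Sum>f\<in>F. c f * f w)}"

definition ssum :: "('x list \<Rightarrow> 'k::field) set \<Rightarrow> ('x list \<Rightarrow> 'k) set \<Rightarrow> ('x list \<Rightarrow> 'k) set" where
  "ssum A B = {v. \<exists>a\<in>A. \<exists>b\<in>B. v = (\<lambda>w. a w + b w)}"

(* Elementary tensor u \<otimes> g \<otimes> u' for words u, u' and a vector g. *)
definition pad :: "'x list \<Rightarrow> ('x list \<Rightarrow> 'k::field) \<Rightarrow> 'x list \<Rightarrow> ('x list \<Rightarrow> 'k)" where
  "pad a g b = (\<lambda>x. if length a + length b \<le> length x \<and> take (length a) x = a
                       \<and> drop (length x - length b) x = b
                   then g (drop (length a) (take (length x - length b) x)) else 0)"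

(* V^{\<otimes>i} \<otimes> W \<otimes> V^{\<otimes>j} *)
definition tens :: "'x set \<Rightarrow> nat \<Rightarrow> ('x list \<Rightarrow> 'k::field) set \<Rightarrow> nat \<Rightarrow> ('x list \<Rightarrow> 'k) set" where
  "tens X i W j = lin_span {pad a g b | a g b. a \<in> words X i \<and> g \<in> W \<and> b \<in> words X j}"

(* Endomorphisms of V^{\<otimes>m} are represented by their matrices M w' w
   (coefficient of w' in the image of w), normalised to 0 outside X^{(m)}. *)
definition mat_ok :: "'x set \<Rightarrow> nat \<Rightarrow> ('x list \<Rightarrow> 'x list \<Rightarrow> 'k::field) \<Rightarrow> bool" where
  "mat_ok X m M \<longleftrightarrow> (\<forall>w' w. (w' \<notin> words X m \<or> w \<notin> words X m) \<longrightarrow> M w' w = 0)"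

definition mapply :: "'x set \<Rightarrow> nat \<Rightarrow> ('x list \<Rightarrow> 'x list \<Rightarrow> 'k::field) \<Rightarrow> ('x list \<Rightarrow> 'k) \<Rightarrow> ('x list \<Rightarrow> 'k)" where
  "mapply X m M v = (\<lambda>w'. if w' \<in> words X m then \<Sum>w\<in>words X m. M w' w * v w else 0)"

definition mcomp :: "'x set \<Rightarrow> nat \<Rightarrow> ('x list \<Rightarrow> 'x list \<Rightarrow> 'k::field) \<Rightarrow> ('x list \<Rightarrow> 'x list \<Rightarrow> 'k) \<Rightarrow> ('x list \<Rightarrow> 'x list \<Rightarrow> 'k)" where
  "mcomp X m A B = (\<lambda>w' w. if w' \<in> words X m \<and> w \<in> words X m
                            then \<Sum>u\<in>words X m. A w' u * B u w else 0)"

definition midentity :: "'x set \<Rightarrow> nat \<Rightarrow> ('x list \<Rightarrow> 'x list \<Rightarrow> 'k::field)" where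
  "midentity X m = (\<lambda>w' w. if w' \<in> words X m \<and> w = w' then 1 else 0)"

definition ker :: "'x set \<Rightarrow> nat \<Rightarrow> ('x list \<Rightarrow> 'x list \<Rightarrow> 'k::field) \<Rightarrow> ('x list \<Rightarrow> 'k) set" where
  "ker X m M = {v \<in> vecs X m. mapply X m M v = (\<lambda>_. 0)}"

(* id_{V^{\<otimes>a}} \<otimes> A \<otimes> id_{V^{\<otimes>b}}, for A an endomorphism of V^{\<otimes>k} *)
definition opmid :: "'x set \<Rightarrow> nat \<Rightarrow> nat \<Rightarrow> ('x list \<Rightarrow> 'x list \<Rightarrow> 'k::field) \<Rightarrow> nat \<Rightarrow> ('x list \<Rightarrow> 'x list \<Rightarrow> 'k)" where
  "opmid X k a A b = (\<lambda>x y. if x \<in> words X (a + k + b) \<and> y \<in> words X (a + k + b)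
                              \<and> take a x = take a y \<and> drop (a + k) x = drop (a + k) y
                           then A (take k (drop a x)) (take k (drop a y)) else 0)"

(* \<langle>t,s\<rangle>^k = ... s t s  (k factors, s applied first) *)
fun braid :: "'x set \<Rightarrow> nat \<Rightarrow> ('x list \<Rightarrow> 'x list \<Rightarrow> 'k::field) \<Rightarrow> ('x list \<Rightarrow> 'x list \<Rightarrow> 'k) \<Rightarrow> nat \<Rightarrow> ('x list \<Rightarrow> 'x list \<Rightarrow> 'k)" where
  "braid X m t s 0 = midentity X m"
| "braid X m t s (Suc k) = mcomp X m (if even k then s else t) (braid X m t s k)"

definition reduction_op :: "'x::linorder set \<Rightarrow> nat \<Rightarrow> ('x list \<Rightarrow> 'x list \<Rightarrow> 'k::field) \<Rightarrow> bool" where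
  "reduction_op X m T \<longleftrightarrow> mat_ok X m T \<and> mcomp X m T T = T \<and>
     (\<forall>w\<in>words X m. (\<lambda>w'. T w' w) = word_vec w \<or>
                     (\<forall>w'\<in>words X m. T w' w \<noteq> 0 \<longrightarrow> lex_less w' w))"

definition theta_inv :: "'x::linorder set \<Rightarrow> nat \<Rightarrow> ('x list \<Rightarrow> 'k::field) set \<Rightarrow> ('x list \<Rightarrow> 'x list \<Rightarrow> 'k)" where
  "theta_inv X m W = (THE T. reduction_op X m T \<and> ker X m T = W)"

definition wedge :: "'x::linorder set \<Rightarrow> nat \<Rightarrow> ('x list \<Rightarrow> 'x list \<Rightarrow> 'k::field) \<Rightarrow> ('x list \<Rightarrow> 'x list \<Rightarrow> 'k) \<Rightarrow> ('x list \<Rightarrow> 'x list \<Rightarrow> 'k)" where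
  "wedge X m T1 T2 = theta_inv X m (ssum (ker X m T1) (ker X m T2))"

definition vee :: "'x::linorder set \<Rightarrow> nat \<Rightarrow> ('x list \<Rightarrow> 'x list \<Rightarrow> 'k::field) \<Rightarrow> ('x list \<Rightarrow> 'x list \<Rightarrow> 'k) \<Rightarrow> ('x list \<Rightarrow> 'x list \<Rightarrow> 'k)" where
  "vee X m T1 T2 = theta_inv X m (ker X m T1 \<inter> ker X m T2)"

(* Iterated wedge T_1 \<and> (T_2 \<and> (... \<and> T_r)) (the operation is associative). *)
fun wedges :: "'x::linorder set \<Rightarrow> nat \<Rightarrow> ('x list \<Rightarrow> 'x list \<Rightarrow> 'k::field) list \<Rightarrow> ('x list \<Rightarrow> 'x list \<Rightarrow> 'k)" where
  "wedges X m [] = midentity X m"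
| "wedges X m [T] = T"
| "wedges X m (T # U # Ts) = wedge X m T (wedges X m (U # Ts))"

definition lm :: "'x::linorder set \<Rightarrow> nat \<Rightarrow> ('x list \<Rightarrow> 'k::field) \<Rightarrow> 'x list" where
  "lm X N f = (THE w. w \<in> words X N \<and> f w \<noteq> 0 \<and>
                 (\<forall>u\<in>words X N. f u \<noteq> 0 \<longrightarrow> u = w \<or> lex_less u w))"

definition reduced_presentation :: "'x::linorder set \<Rightarrow> nat \<Rightarrow> ('x list \<Rightarrow> 'k::field) set \<Rightarrow> bool" where
  "reduced_presentation X N R \<longleftrightarrow>
     R \<subseteq> vecs X N \<and>
     (\<forall>f\<in>R. f \<noteq> (\<lambda>_. 0) \<and> f (lm X N f) = 1) \<and>
     (\<forall>f\<in>R. \<forall>g\<in>R. lm X N f = lm X N g \<longrightarrow> f = g) \<and>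
     (\<forall>f\<in>R. \<forall>w\<in>words X N. w \<noteq> lm X N f \<and> f w \<noteq> 0 \<longrightarrow> w \<notin> lm X N ` R)"

definition Smat :: "'x::linorder set \<Rightarrow> nat \<Rightarrow> ('x list \<Rightarrow> 'k::field) set \<Rightarrow> ('x list \<Rightarrow> 'x list \<Rightarrow> 'k)" where
  "Smat X N R = (\<lambda>w' w. if w' \<in> words X N \<and> w \<in> words X N then
        (if w \<in> lm X N ` R
         then word_vec w w' - (THE f. f \<in> R \<and> lm X N f = w) w'
         else word_vec w w')
      else 0)"

(* S_i^{(m)} = id_{V^{\<otimes>i}} \<otimes> S \<otimes> id_{V^{\<otimes>m-N-i}} *)
definition Sop :: "'x::linorder set \<Rightarrow> nat \<Rightarrow> ('x list \<Rightarrow> 'k::field) set \<Rightarrow> nat \<Rightarrow> nat \<Rightarrow> ('x list \<Rightarrow> 'x list \<Rightarrow> 'k)" where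
  "Sop X N R m i = opmid X N i (Smat X N R) (m - N - i)"

definition side_confluent :: "'x::linorder set \<Rightarrow> nat \<Rightarrow> ('x list \<Rightarrow> 'k::field) set \<Rightarrow> bool" where
  "side_confluent X N R \<longleftrightarrow>
     (\<forall>m. 1 \<le> m \<and> m \<le> N - 1 \<longrightarrow>
        (\<exists>k\<ge>1. braid X (N + m) (opmid X N m (Smat X N R) 0) (opmid X N 0 (Smat X N R) m) k
              = braid X (N + m) (opmid X N 0 (Smat X N R) m) (opmid X N m (Smat X N R) 0) k))"

definition Rbar :: "'x::linorder set \<Rightarrow> ('x list \<Rightarrow> 'k::field) set \<Rightarrow> ('x list \<Rightarrow> 'k) set" where
  "Rbar X R = lin_span R"

definition extra_confluent :: "'x::linorder set \<Rightarrow> nat \<Rightarrow> ('x list \<Rightarrow> 'k::field) set \<Rightarrow> bool" where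
  "extra_confluent X N R \<longleftrightarrow> side_confluent X N R \<and> finite X \<and>
     (\<forall>n. 2 \<le> n \<and> n \<le> N - 1 \<longrightarrow>
        tens X n (Rbar X R) 0 \<inter> tens X 0 (Rbar X R) n \<subseteq> tens X (n - 1) (Rbar X R) 1)"

definition lN :: "nat \<Rightarrow> nat \<Rightarrow> nat" where
  "lN N n = (n div 2) * N + n mod 2"

definition J :: "'x::linorder set \<Rightarrow> nat \<Rightarrow> ('x list \<Rightarrow> 'k::field) set \<Rightarrow> nat \<Rightarrow> ('x list \<Rightarrow> 'k) set" where
  "J X N R n = (if n = 1 then vecs X 1 else if n = 2 then Rbar X R
               else (\<Inter>i\<in>{0..lN N n - N}. tens X i (Rbar X R) (lN N n - N - i)))"

definition F2 :: "'x::linorder set \<Rightarrow> nat \<Rightarrow> ('x list \<Rightarrow> 'k::field) set \<Rightarrow> nat \<Rightarrow> nat \<Rightarrow> ('x list \<Rightarrow> 'x list \<Rightarrow> 'k)" where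
  "F2 X N R n m = (if m < lN N (n + 1) then midentity X m
                   else theta_inv X m (tens X (m - lN N (n + 1)) (J X N R (n + 1)) 0))"

end

(*
  Every operator in the statement is a reduction operator, and a reduction operator is determined
  by its kernel: it projects onto the span of the words that are not leading words of the kernel.
  So the theorem is an identity of subspaces of V^(m). With E_i = V^i (x) Rbar (x) V^(m-N-i) and
  a the last index of the window of T_{n,m}, the kernel of T_{n,m} is the sum of the E_i over the
  window, the kernel of F_2^{n-1,m} is the intersection of the E_i for i from a + 1 (n even) or
  a + N - 1 (n odd) up to m - N, and the kernel of F_2^{n,m} is the same intersection taken
  from a. For odd n the window is {a}, and extra-confluence fills the gap. For even n, an element
  x of the first intersection that lies in the window sum but not in E_a would give a leading word
  of S_a x reducible both at a + 1 and at an earlier window index, hence at a by extra-confluence,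
  which is impossible. Leading words of elements of the window sum are located through standard
  representations, which side-confluence provides for every pair of overlapping E_i.
*)

theory Submission
  imports Defs "HOL-Library.Function_Algebras" "HOL-Library.List_Lexorder"
begin

lemma sum_fun_apply: "(sum f A) x = sum (\<lambda>a. f a x) A"
  by (induction A rule: infinite_finite_induct) auto

lemma lex_less_iff: "lex_less u v \<longleftrightarrow> u < v"
  by (simp add: lex_less_def list_less_def)

lemma finite_words: "finite X \<Longrightarrow> finite (words X m)"
  unfolding words_def by (rule finite_lists_length_eq)

lemma in_words: "w \<in> words X m \<longleftrightarrow> set w \<subseteq> X \<and> length w = m"
  by (simp add: words_def)

lemma append_in_words [simp]:
  "a @ b \<in> words X m \<longleftrightarrow> set a \<subseteq> X \<and> set b \<subseteq> X \<and> length a + length b = m"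
  by (auto simp: words_def)

lemma words_0: "words X 0 = {[]}"
  by (auto simp: words_def)

lemma take_mid_drop: "x = take i x @ take k (drop i x) @ drop (i + k) x"
  by (metis append_take_drop_id drop_drop add.commute)

lemma less_list_append_mono:
  fixes u v :: "'x::linorder list"
  assumes "u < v" "length u = length v"
  shows "a @ u @ b < a @ v @ b"
proof -
  have "(u @ b, v @ b) \<in> lexord {(x, y). x < y}"
    using assms lexord_sufI by (fastforce simp: list_less_def)
  then have "(a @ u @ b, a @ v @ b) \<in> lexord {(x, y). x < y}"
    using lexord_append_leftI by fastforce
  then show ?thesis by (simp add: list_less_def)
qed

lemma le_list_append_mono:
  fixes u v :: "'x::linorder list"
  assumes "u \<le> v" "length u = length v"
  shows "a @ u @ b \<le> a @ v @ b"
  using assms less_list_append_mono[of u v a b] by (auto simp: order_le_less)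

definition scale :: "'k::field \<Rightarrow> ('x list \<Rightarrow> 'k) \<Rightarrow> ('x list \<Rightarrow> 'k)" where
  "scale c v = (\<lambda>w. c * v w)"

lemma scale_apply [simp]: "scale c v w = c * v w"
  by (simp add: scale_def)

lemma scale_minus_one: "scale (-1) v = - v"
  by (auto simp: scale_def)

lemma scale_add_right: "scale c (u + v) = scale c u + scale c v"
  by (simp add: fun_eq_iff distrib_left)

definition supp_le :: "('x::linorder list \<Rightarrow> 'k::field) \<Rightarrow> 'x list \<Rightarrow> bool" where
  "supp_le v B \<longleftrightarrow> (\<forall>w. v w \<noteq> 0 \<longrightarrow> w \<le> B)"

definition supp_lt :: "('x::linorder list \<Rightarrow> 'k::field) \<Rightarrow> 'x list \<Rightarrow> bool" where
  "supp_lt v B \<longleftrightarrow> (\<forall>w. v w \<noteq> 0 \<longrightarrow> w < B)"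

definition supp_in :: "('x list \<Rightarrow> 'k::field) \<Rightarrow> 'x list set \<Rightarrow> bool" where
  "supp_in v A \<longleftrightarrow> (\<forall>w. v w \<noteq> 0 \<longrightarrow> w \<in> A)"

lemma supp_le_0 [simp]: "supp_le 0 B"
  by (simp add: supp_le_def)

lemma supp_lt_0 [simp]: "supp_lt 0 B"
  by (simp add: supp_lt_def)

lemma supp_le_add: "supp_le u B \<Longrightarrow> supp_le v B \<Longrightarrow> supp_le (u + v) B"
  unfolding supp_le_def by (metis add.right_neutral plus_fun_apply)

lemma supp_le_diff: "supp_le u B \<Longrightarrow> supp_le v B \<Longrightarrow> supp_le (u - v) B"
  unfolding supp_le_def by (metis diff_self minus_apply)

lemma supp_le_uminus: "supp_le u B \<Longrightarrow> supp_le (- u) B"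
  by (auto simp: supp_le_def)

lemma supp_le_scale: "supp_le u B \<Longrightarrow> supp_le (scale c u) B"
  by (auto simp: supp_le_def)

lemma supp_lt_add: "supp_lt u B \<Longrightarrow> supp_lt v B \<Longrightarrow> supp_lt (u + v) B"
  unfolding supp_lt_def by (metis add.right_neutral plus_fun_apply)

lemma supp_lt_scale: "supp_lt u B \<Longrightarrow> supp_lt (scale c u) B"
  by (auto simp: supp_lt_def)

lemma supp_le_imp_lt: "supp_le u B \<Longrightarrow> u B = 0 \<Longrightarrow> supp_lt u B"
  by (auto simp: supp_le_def supp_lt_def order_le_less)

lemma supp_lt_imp_le: "supp_lt u B \<Longrightarrow> supp_le u B"
  by (auto simp: supp_le_def supp_lt_def)

lemma supp_le_mono: "supp_le u B \<Longrightarrow> B \<le> B' \<Longrightarrow> supp_le u B'"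
  by (auto simp: supp_le_def)

lemma supp_le_less_trans: "supp_le u B \<Longrightarrow> B < B' \<Longrightarrow> supp_lt u B'"
  by (auto simp: supp_le_def supp_lt_def)

lemma supp_lt_sum: "finite I \<Longrightarrow> (\<And>i. i \<in> I \<Longrightarrow> supp_lt (f i) B) \<Longrightarrow> supp_lt (sum f I) B"
  by (induction I rule: finite_induct) (auto intro: supp_lt_add)

lemma supp_in_add: "supp_in u A \<Longrightarrow> supp_in v A \<Longrightarrow> supp_in (u + v) A"
  unfolding supp_in_def by (metis add.right_neutral plus_fun_apply)

lemma supp_in_diff: "supp_in u A \<Longrightarrow> supp_in v A \<Longrightarrow> supp_in (u - v) A"
  unfolding supp_in_def by (metis diff_self minus_apply)

lemma vecs_0 [simp]: "0 \<in> vecs X m"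
  by (simp add: vecs_def)

lemma vecs_add: "u \<in> vecs X m \<Longrightarrow> v \<in> vecs X m \<Longrightarrow> u + v \<in> vecs X m"
  by (auto simp: vecs_def)

lemma vecs_diff: "u \<in> vecs X m \<Longrightarrow> v \<in> vecs X m \<Longrightarrow> u - v \<in> vecs X m"
  by (auto simp: vecs_def)

lemma vecs_scale: "u \<in> vecs X m \<Longrightarrow> scale c u \<in> vecs X m"
  by (auto simp: vecs_def)

lemma vecs_outside: "u \<in> vecs X m \<Longrightarrow> w \<notin> words X m \<Longrightarrow> u w = 0"
  by (auto simp: vecs_def)

lemma word_vec_vecs: "w \<in> words X m \<Longrightarrow> word_vec w \<in> vecs X m"
  by (auto simp: vecs_def word_vec_def)

lemma supp_le_word_vec: "supp_le (word_vec w) w"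
  by (simp add: supp_le_def word_vec_def)

definition subspace :: "'x set \<Rightarrow> nat \<Rightarrow> ('x list \<Rightarrow> 'k::field) set \<Rightarrow> bool" where
  "subspace X m W \<longleftrightarrow> W \<subseteq> vecs X m \<and> 0 \<in> W \<and> (\<forall>u\<in>W. \<forall>v\<in>W. u + v \<in> W) \<and> (\<forall>c. \<forall>v\<in>W. scale c v \<in> W)"

lemma subspace_imp_vecs: "subspace X m W \<Longrightarrow> v \<in> W \<Longrightarrow> v \<in> vecs X m"
  by (auto simp: subspace_def)

lemma subspace_0: "subspace X m W \<Longrightarrow> 0 \<in> W"
  by (auto simp: subspace_def)

lemma subspace_add: "subspace X m W \<Longrightarrow> u \<in> W \<Longrightarrow> v \<in> W \<Longrightarrow> u + v \<in> W"
  by (auto simp: subspace_def)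

lemma subspace_scale: "subspace X m W \<Longrightarrow> v \<in> W \<Longrightarrow> scale c v \<in> W"
  by (auto simp: subspace_def)

lemma subspace_uminus: "subspace X m W \<Longrightarrow> v \<in> W \<Longrightarrow> - v \<in> W"
  using subspace_scale[of X m W v "-1"] by (simp add: scale_minus_one)

lemma subspace_diff: "subspace X m W \<Longrightarrow> u \<in> W \<Longrightarrow> v \<in> W \<Longrightarrow> u - v \<in> W"
  using subspace_add[of X m W u "- v"] subspace_uminus[of X m W v] by simp

lemma subspace_sum:
  assumes "subspace X m W" "finite I" "\<And>i. i \<in> I \<Longrightarrow> f i \<in> W"
  shows "sum f I \<in> W"
  using assms(2,3)
  by (induction I rule: finite_induct) (auto intro: subspace_add[OF assms(1)] subspace_0[OF assms(1)])

lemma subspace_vecs: "subspace X m (vecs X m)"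
  by (auto simp: subspace_def vecs_def)

lemma subspace_INT:
  assumes "I \<noteq> {}" "\<And>i. i \<in> I \<Longrightarrow> subspace X m (W i)"
  shows "subspace X m (\<Inter>i\<in>I. W i)"
  unfolding subspace_def
proof (intro conjI ballI allI)
  obtain i0 where i0: "i0 \<in> I" using assms(1) by blast
  show "(\<Inter>i\<in>I. W i) \<subseteq> vecs X m"
    using subspace_imp_vecs[OF assms(2)[OF i0]] i0 by auto
qed (use assms(2) in \<open>auto intro: subspace_0 subspace_add subspace_scale\<close>)

lemma lin_span_add:
  assumes "u \<in> lin_span S" "v \<in> lin_span S"
  shows "u + v \<in> lin_span S"
proof -
  obtain F c where F: "finite F" "F \<subseteq> S" "u = (\<lambda>w. \<Sum>f\<in>F. c f * f w)"
    using assms(1) by (auto simp: lin_span_def)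
  obtain G d where G: "finite G" "G \<subseteq> S" "v = (\<lambda>w. \<Sum>f\<in>G. d f * f w)"
    using assms(2) by (auto simp: lin_span_def)
  define e where "e f = (if f \<in> F then c f else 0) + (if f \<in> G then d f else 0)" for f
  have "u + v = (\<lambda>w. \<Sum>f\<in>F \<union> G. e f * f w)"
  proof
    fix w
    have "(\<Sum>f\<in>F. c f * f w) = (\<Sum>f\<in>F \<union> G. (if f \<in> F then c f else 0) * f w)"
      by (rule sum.mono_neutral_cong_left) (use F G in auto)
    moreover have "(\<Sum>f\<in>G. d f * f w) = (\<Sum>f\<in>F \<union> G. (if f \<in> G then d f else 0) * f w)"
      by (rule sum.mono_neutral_cong_left) (use F G in auto)
    ultimately show "(u + v) w = (\<Sum>f\<in>F \<union> G. e f * f w)"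
      using F G by (simp add: e_def distrib_right sum.distrib)
  qed
  then show ?thesis
    unfolding lin_span_def by (intro CollectI exI[of _ "F \<union> G"] exI[of _ e]) (use F G in auto)
qed

lemma lin_span_scale:
  assumes "u \<in> lin_span S"
  shows "scale a u \<in> lin_span S"
proof -
  obtain F c where F: "finite F" "F \<subseteq> S" "u = (\<lambda>w. \<Sum>f\<in>F. c f * f w)"
    using assms by (auto simp: lin_span_def)
  have "scale a u = (\<lambda>w. \<Sum>f\<in>F. (a * c f) * f w)"
    unfolding F(3) scale_def fun_eq_iff by (simp add: sum_distrib_left mult.assoc)
  then show ?thesis
    unfolding lin_span_def by (intro CollectI exI[of _ F] exI[of _ "\<lambda>f. a * c f"]) (use F in auto)
qed

lemma lin_span_0: "0 \<in> lin_span S"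
  unfolding lin_span_def by (rule CollectI, rule exI[of _ "{}"]) (auto simp: zero_fun_def)

lemma lin_span_base: "f \<in> S \<Longrightarrow> f \<in> lin_span S"
  unfolding lin_span_def by (rule CollectI, rule exI[of _ "{f}"], rule exI[of _ "\<lambda>_. 1"]) auto

lemma lin_span_sum: "finite I \<Longrightarrow> (\<And>i. i \<in> I \<Longrightarrow> f i \<in> lin_span S) \<Longrightarrow> sum f I \<in> lin_span S"
  by (induction I rule: finite_induct) (auto intro: lin_span_add lin_span_0)

lemma lin_span_vecs: "S \<subseteq> vecs X m \<Longrightarrow> lin_span S \<subseteq> vecs X m"
  unfolding lin_span_def vecs_def by (auto intro!: sum.neutral)

lemma subspace_lin_span: "S \<subseteq> vecs X m \<Longrightarrow> subspace X m (lin_span S)"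
  unfolding subspace_def by (simp add: lin_span_vecs lin_span_0 lin_span_add lin_span_scale)

lemma lin_span_eq_sum_scale:
  assumes "v \<in> lin_span S"
  obtains F c where "finite F" "F \<subseteq> S" "v = (\<Sum>f\<in>F. scale (c f) f)"
  using assms by (auto simp: lin_span_def fun_eq_iff sum_fun_apply)

lemma lin_span_subset:
  assumes "subspace X m W" "S \<subseteq> W"
  shows "lin_span S \<subseteq> W"
proof
  fix v assume "v \<in> lin_span S"
  then obtain F c where "finite F" "F \<subseteq> S" "v = (\<Sum>f\<in>F. scale (c f) f)"
    by (rule lin_span_eq_sum_scale)
  then show "v \<in> W" using assms by (auto intro!: subspace_sum subspace_scale)
qed

lemma vecs_leading_word:
  assumes "finite X" "v \<in> vecs X m" "v \<noteq> 0"
  obtains B where "B \<in> words X m" "v B \<noteq> 0" "supp_le v B"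
proof -
  let ?Z = "{w. v w \<noteq> 0}"
  have sub: "?Z \<subseteq> words X m" using assms(2) by (auto simp: vecs_def)
  have fin: "finite ?Z" using finite_subset[OF sub finite_words[OF assms(1)]] .
  have ne: "?Z \<noteq> {}" using assms(3) by (auto simp: fun_eq_iff)
  show ?thesis
    using that[of "Max ?Z"] Max_in[OF fin ne] Max_ge[OF fin] sub by (auto simp: supp_le_def)
qed

lemma words_less_induct [consumes 2, case_names less]:
  fixes X :: "'x::linorder set"
  assumes "finite X" "B \<in> words X m"
    and less: "\<And>B. B \<in> words X m \<Longrightarrow> (\<And>B'. B' \<in> words X m \<Longrightarrow> B' < B \<Longrightarrow> P B') \<Longrightarrow> P B"
  shows "P B"
  using assms(2)
proof (induction B rule: measure_induct_rule[of "\<lambda>B. card {u \<in> words X m. u < B}"])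
  case (less B)
  have fin: "finite {u \<in> words X m. u < B}"
    using finite_words[OF assms(1)] by (rule rev_finite_subset) blast
  show ?case
  proof (rule assms(3)[OF less.prems])
    fix B' assume B': "B' \<in> words X m" "B' < B"
    then have "{u \<in> words X m. u < B'} \<subset> {u \<in> words X m. u < B}"
      by auto
    then have "card {u \<in> words X m. u < B'} < card {u \<in> words X m. u < B}"
      using fin by (rule psubset_card_mono[rotated])
    then show "P B'" using less.IH B' by blast
  qed
qed

lemma vecs_leading_word_induct:
  fixes X :: "'x::linorder set" and P :: "('x list \<Rightarrow> 'k::field) \<Rightarrow> bool"
  assumes "finite X" "P 0"
    and step: "\<And>v B. v \<in> vecs X m \<Longrightarrow> B \<in> words X m \<Longrightarrow> v B \<noteq> 0 \<Longrightarrow> supp_le v B \<Longrightarrow>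
        (\<And>v'. v' \<in> vecs X m \<Longrightarrow> supp_lt v' B \<Longrightarrow> P v') \<Longrightarrow> P v"
    and v: "v \<in> vecs X m"
  shows "P v"
proof -
  have main: "\<forall>v\<in>vecs X m. v B \<noteq> 0 \<and> supp_le v B \<longrightarrow> P v" if "B \<in> words X m" for B
    using assms(1) that
  proof (induction B rule: words_less_induct)
    case (less B)
    show ?case
    proof (intro ballI impI)
      fix v :: "'x list \<Rightarrow> 'k" assume v: "v \<in> vecs X m" "v B \<noteq> 0 \<and> supp_le v B"
      show "P v"
      proof (rule step[OF v(1) less.hyps])
        fix v' :: "'x list \<Rightarrow> 'k" assume v': "v' \<in> vecs X m" "supp_lt v' B"
        show "P v'"
        proof (cases "v' = 0")
          case False
          then obtain B' where "B' \<in> words X m" "v' B' \<noteq> 0" "supp_le v' B'"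
            using vecs_leading_word[OF assms(1) v'(1)] by blast
          then show ?thesis using less.IH v' by (auto simp: supp_lt_def)
        qed (use assms(2) in simp)
      qed (use v in auto)
    qed
  qed
  show ?thesis
  proof (cases "v = 0")
    case False
    then obtain B where "B \<in> words X m" "v B \<noteq> 0" "supp_le v B"
      using vecs_leading_word[OF assms(1) v] by blast
    then show ?thesis using main v by blast
  qed (use assms(2) in simp)
qed

lemma mapply_vecs [simp]: "mapply X m A v \<in> vecs X m"
  by (simp add: mapply_def vecs_def)

lemma mapply_add: "mapply X m A (u + v) = mapply X m A u + mapply X m A v"
  by (auto simp: mapply_def fun_eq_iff distrib_left sum.distrib)

lemma mapply_diff: "mapply X m A (u - v) = mapply X m A u - mapply X m A v"
  by (auto simp: mapply_def fun_eq_iff right_diff_distrib sum_subtractf)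

lemma mapply_scale: "mapply X m A (scale c v) = scale c (mapply X m A v)"
  by (auto simp: mapply_def fun_eq_iff sum_distrib_left mult_ac)

lemma mapply_0 [simp]: "mapply X m A 0 = 0"
  by (auto simp: mapply_def fun_eq_iff)

lemma mapply_sum: "finite I \<Longrightarrow> mapply X m A (sum f I) = (\<Sum>i\<in>I. mapply X m A (f i))"
proof (induction I rule: finite_induct)
  case empty show ?case by (simp only: sum.empty mapply_0)
next
  case (insert x F) then show ?case by (simp only: sum.insert[OF insert.hyps] mapply_add)
qed

lemma mapply_mcomp: "mapply X m (mcomp X m A B) v = mapply X m A (mapply X m B v)"
proof (rule ext)
  fix w'
  let ?W = "words X m"
  show "mapply X m (mcomp X m A B) v w' = mapply X m A (mapply X m B v) w'"
  proof (cases "w' \<in> ?W")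
    case True
    have "mapply X m (mcomp X m A B) v w' = (\<Sum>w\<in>?W. \<Sum>u\<in>?W. A w' u * (B u w * v w))"
      using True by (simp add: mapply_def mcomp_def sum_distrib_right mult.assoc)
    also have "\<dots> = (\<Sum>u\<in>?W. A w' u * (\<Sum>w\<in>?W. B u w * v w))"
      by (subst sum.swap) (simp add: sum_distrib_left)
    also have "\<dots> = mapply X m A (mapply X m B v) w'"
      using True by (simp add: mapply_def)
    finally show ?thesis .
  qed (simp add: mapply_def)
qed

lemma mapply_midentity:
  assumes "finite X" "v \<in> vecs X m"
  shows "mapply X m (midentity X m) v = v"
  using assms
  by (auto simp: fun_eq_iff mapply_def midentity_def vecs_outside if_distrib[of "\<lambda>x. x * _"]
      sum.delta[OF finite_words[OF assms(1)]] cong: if_cong)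

lemma mcomp_col: "w \<in> words X m \<Longrightarrow> mcomp X m A B w' w = mapply X m A (\<lambda>u. B u w) w'"
  by (simp add: mcomp_def mapply_def)

lemma mapply_word_vec:
  assumes "finite X" "mat_ok X m A" "w \<in> words X m"
  shows "mapply X m A (word_vec w) = (\<lambda>w'. A w' w)"
  using assms
  by (auto simp: fun_eq_iff mapply_def word_vec_def mat_ok_def if_distrib[of "\<lambda>x. _ * x"]
      sum.delta[OF finite_words[OF assms(1)]] cong: if_cong)

lemma mapply_nonzero:
  assumes "mapply X m A v w' \<noteq> 0"
  obtains w where "w' \<in> words X m" "w \<in> words X m" "A w' w \<noteq> 0" "v w \<noteq> 0"
proof -
  have w': "w' \<in> words X m" using assms by (auto simp: mapply_def split: if_splits)
  then have "(\<Sum>w\<in>words X m. A w' w * v w) \<noteq> 0" using assms by (simp add: mapply_def)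
  then obtain w where "w \<in> words X m" "A w' w * v w \<noteq> 0"
    by (meson sum.neutral)
  then show ?thesis using that w' by auto
qed

lemma supp_le_mapply_triangular:
  assumes "\<And>x y. A x y \<noteq> 0 \<Longrightarrow> x \<le> y" "supp_le v B"
  shows "supp_le (mapply X m A v) B"
  unfolding supp_le_def
proof (intro allI impI)
  fix w assume "mapply X m A v w \<noteq> 0"
  then obtain y where "A w y \<noteq> 0" "v y \<noteq> 0" by (rule mapply_nonzero)
  then show "w \<le> B" using assms by (meson order_trans supp_le_def)
qed

section \<open>Reduction operators\<close>

text \<open>The words that are not the leading word of any element of \<open>W\<close>: they span a complement
  of \<open>W\<close>, and the reduction operator with kernel \<open>W\<close> projects onto their span.\<close>

definition normal_words :: "'x::linorder set \<Rightarrow> nat \<Rightarrow> ('x list \<Rightarrow> 'k::field) set \<Rightarrow> 'x list set" where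
  "normal_words X m W = {w \<in> words X m. \<not> (\<exists>v\<in>W. v w \<noteq> 0 \<and> supp_le v w)}"

lemma subspace_supp_in_normal_words_eq_0:
  assumes "finite X" "subspace X m W" "v \<in> W" "supp_in v (normal_words X m W)"
  shows "v = 0"
proof (rule ccontr)
  assume "v \<noteq> 0"
  then obtain B where B: "B \<in> words X m" "v B \<noteq> 0" "supp_le v B"
    using vecs_leading_word[OF assms(1) subspace_imp_vecs[OF assms(2,3)]] by blast
  then have "B \<in> normal_words X m W" using assms(4) by (auto simp: supp_in_def)
  then show False using B assms(3) by (auto simp: normal_words_def)
qed

lemma normal_form_exists:
  fixes X :: "'x::linorder set" and W :: "('x list \<Rightarrow> 'k::field) set"
  assumes fin: "finite X" and W: "subspace X m W" and v: "v \<in> vecs X m"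
  shows "\<exists>t. t \<in> vecs X m \<and> supp_in t (normal_words X m W) \<and> v - t \<in> W"
  using fin _ _ v
proof (rule vecs_leading_word_induct)
  show "\<exists>t. t \<in> vecs X m \<and> supp_in t (normal_words X m W) \<and> 0 - t \<in> W"
    by (rule exI[of _ 0]) (auto simp: supp_in_def subspace_0[OF W])
next
  fix v :: "'x list \<Rightarrow> 'k" and B
  assume v: "v \<in> vecs X m" and B: "B \<in> words X m" and "v B \<noteq> 0" and sv: "supp_le v B"
    and IH: "\<And>v'. v' \<in> vecs X m \<Longrightarrow> supp_lt v' B \<Longrightarrow>
      \<exists>t. t \<in> vecs X m \<and> supp_in t (normal_words X m W) \<and> v' - t \<in> W"
  show "\<exists>t. t \<in> vecs X m \<and> supp_in t (normal_words X m W) \<and> v - t \<in> W"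
  proof (cases "B \<in> normal_words X m W")
    case True
    define v' where "v' = v - scale (v B) (word_vec B)"
    have v'v: "v' \<in> vecs X m" unfolding v'_def using v B by (intro vecs_diff vecs_scale word_vec_vecs)
    have v'l: "supp_lt v' B"
      using sv unfolding supp_lt_def supp_le_def v'_def by (auto simp: word_vec_def order_le_less)
    obtain t' where t': "t' \<in> vecs X m" "supp_in t' (normal_words X m W)" "v' - t' \<in> W"
      using IH[OF v'v v'l] by blast
    define t where "t = t' + scale (v B) (word_vec B)"
    have "t \<in> vecs X m" unfolding t_def using t' B by (intro vecs_add vecs_scale word_vec_vecs)
    moreover have "supp_in t (normal_words X m W)"
      unfolding t_def using t'(2) True by (intro supp_in_add) (auto simp: supp_in_def word_vec_def)
    moreover have "v - t = v' - t'" unfolding t_def v'_def by (simp add: algebra_simps)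
    ultimately show ?thesis using t'(3) by metis
  next
    case False
    then obtain g where g: "g \<in> W" "g B \<noteq> 0" "supp_le g B" using B by (auto simp: normal_words_def)
    define v' where "v' = v - scale (v B / g B) g"
    have v'v: "v' \<in> vecs X m"
      unfolding v'_def using v subspace_imp_vecs[OF W g(1)] by (intro vecs_diff vecs_scale)
    have "v' B = 0" unfolding v'_def using g(2) by simp
    moreover have "supp_le v' B" unfolding v'_def by (intro supp_le_diff supp_le_scale sv g(3))
    ultimately have v'l: "supp_lt v' B" by (rule supp_le_imp_lt[rotated])
    obtain t' where t': "t' \<in> vecs X m" "supp_in t' (normal_words X m W)" "v' - t' \<in> W"
      using IH[OF v'v v'l] by blast
    have "v - t' = (v' - t') + scale (v B / g B) g" unfolding v'_def by (simp add: algebra_simps)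
    also have "\<dots> \<in> W" using t'(3) g(1) W by (intro subspace_add subspace_scale)
    finally show ?thesis using t' by blast
  qed
qed

definition normal_form :: "'x::linorder set \<Rightarrow> nat \<Rightarrow> ('x list \<Rightarrow> 'k::field) set \<Rightarrow> ('x list \<Rightarrow> 'k) \<Rightarrow> ('x list \<Rightarrow> 'k)" where
  "normal_form X m W v = (THE t. t \<in> vecs X m \<and> supp_in t (normal_words X m W) \<and> v - t \<in> W)"

lemma normal_form_unique:
  assumes fin: "finite X" and W: "subspace X m W"
    and t1: "supp_in t1 (normal_words X m W)" "v - t1 \<in> W"
    and t2: "supp_in t2 (normal_words X m W)" "v - t2 \<in> W"
  shows "t1 = t2"
proof -
  have "t1 - t2 = (v - t2) - (v - t1)" by simp
  also have "\<dots> \<in> W" by (rule subspace_diff[OF W t2(2) t1(2)])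
  finally have "t1 - t2 = 0"
    using subspace_supp_in_normal_words_eq_0[OF fin W] supp_in_diff[OF t1(1) t2(1)] by blast
  then show ?thesis by simp
qed

lemma normal_form:
  assumes fin: "finite X" and W: "subspace X m W" and v: "v \<in> vecs X m"
  shows "normal_form X m W v \<in> vecs X m" "supp_in (normal_form X m W v) (normal_words X m W)"
    "v - normal_form X m W v \<in> W"
proof -
  obtain t where t: "t \<in> vecs X m \<and> supp_in t (normal_words X m W) \<and> v - t \<in> W"
    using normal_form_exists[OF fin W v] by blast
  have "normal_form X m W v = t"
    unfolding normal_form_def by (rule the_equality) (use t normal_form_unique[OF fin W] in blast)+
  then show "normal_form X m W v \<in> vecs X m" "supp_in (normal_form X m W v) (normal_words X m W)"
    "v - normal_form X m W v \<in> W"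
    using t by simp_all
qed

lemma normal_form_eqI:
  assumes fin: "finite X" and W: "subspace X m W" and v: "v \<in> vecs X m"
    and t: "supp_in t (normal_words X m W)" "v - t \<in> W"
  shows "normal_form X m W v = t"
  using normal_form_unique[OF fin W _ _ t] normal_form[OF fin W v] by blast

definition reducer :: "'x::linorder set \<Rightarrow> nat \<Rightarrow> ('x list \<Rightarrow> 'k::field) set \<Rightarrow> ('x list \<Rightarrow> 'x list \<Rightarrow> 'k)" where
  "reducer X m W = (\<lambda>w' w. if w' \<in> words X m \<and> w \<in> words X m then normal_form X m W (word_vec w) w' else 0)"

lemma reducer_col:
  assumes fin: "finite X" and W: "subspace X m W" and w: "w \<in> words X m"
  shows "(\<lambda>w'. reducer X m W w' w) = normal_form X m W (word_vec w)"
  using w normal_form(1)[OF fin W word_vec_vecs[OF w]]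
  by (auto simp: fun_eq_iff reducer_def vecs_outside)

lemma mapply_reducer:
  assumes fin: "finite X" and W: "subspace X m W" and v: "v \<in> vecs X m"
  shows "mapply X m (reducer X m W) v = normal_form X m W v"
proof (rule normal_form_eqI[OF fin W v, symmetric])
  let ?t = "mapply X m (reducer X m W) v"
  let ?W = "words X m"
  let ?nf = "\<lambda>w. normal_form X m W (word_vec w)"
  show "supp_in ?t (normal_words X m W)"
    unfolding supp_in_def
  proof (intro allI impI)
    fix w' assume "?t w' \<noteq> 0"
    then obtain w where "w \<in> ?W" "reducer X m W w' w \<noteq> 0" by (rule mapply_nonzero)
    then show "w' \<in> normal_words X m W"
      using reducer_col[OF fin W] normal_form(2)[OF fin W word_vec_vecs] by (metis supp_in_def)
  qed
  have "v - ?t = (\<Sum>w\<in>?W. scale (v w) (word_vec w - ?nf w))"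
  proof (rule ext)
    fix w'
    have "(\<Sum>w\<in>?W. v w * word_vec w w') = v w'"
      using v by (cases "w' \<in> ?W")
        (auto simp: word_vec_def vecs_outside if_distrib[of "\<lambda>x. _ * x"]
          sum.delta[OF finite_words[OF fin]] sum.delta'[OF finite_words[OF fin]] cong: if_cong)
    moreover have "?nf w w' = 0" if "w \<in> ?W" "w' \<notin> ?W" for w
      using normal_form(1)[OF fin W word_vec_vecs[OF that(1)]] that(2) by (rule vecs_outside)
    ultimately show "(v - ?t) w' = (\<Sum>w\<in>?W. scale (v w) (word_vec w - ?nf w)) w'"
      by (cases "w' \<in> ?W")
        (auto simp: sum_fun_apply right_diff_distrib sum_subtractf mapply_def reducer_def mult.commute)
  qed
  also have "\<dots> \<in> W"
    using normal_form(3)[OF fin W word_vec_vecs] finite_words[OF fin]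
    by (intro subspace_sum[OF W] subspace_scale[OF W]) auto
  finally show "v - ?t \<in> W" .
qed

lemma normal_form_normal_form:
  assumes fin: "finite X" and W: "subspace X m W" and v: "v \<in> vecs X m"
  shows "normal_form X m W (normal_form X m W v) = normal_form X m W v"
  using normal_form[OF fin W v] by (intro normal_form_eqI[OF fin W]) (auto simp: subspace_0[OF W])

lemma ker_reducer:
  assumes fin: "finite X" and W: "subspace X m W"
  shows "ker X m (reducer X m W) = W"
proof
  show "ker X m (reducer X m W) \<subseteq> W"
  proof
    fix v assume "v \<in> ker X m (reducer X m W)"
    then have v: "v \<in> vecs X m" "normal_form X m W v = 0"
      using mapply_reducer[OF fin W] by (auto simp: ker_def zero_fun_def)
    then show "v \<in> W" using normal_form(3)[OF fin W v(1)] by simp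
  qed
  show "W \<subseteq> ker X m (reducer X m W)"
  proof
    fix v assume v: "v \<in> W"
    have vv: "v \<in> vecs X m" using subspace_imp_vecs[OF W v] .
    have "normal_form X m W v = 0"
      by (rule normal_form_eqI[OF fin W vv]) (use v in \<open>auto simp: supp_in_def\<close>)
    then show "v \<in> ker X m (reducer X m W)"
      using vv mapply_reducer[OF fin W vv] by (simp add: ker_def zero_fun_def)
  qed
qed

lemma reducer_col_below:
  assumes fin: "finite X" and W: "subspace X m W" and w: "w \<in> words X m"
    and w_lead: "w \<notin> normal_words X m W" and nz: "reducer X m W w' w \<noteq> 0"
  shows "w' < w"
proof (rule ccontr)
  let ?t = "normal_form X m W (word_vec w)"
  have t: "?t \<in> vecs X m" "supp_in ?t (normal_words X m W)" "word_vec w - ?t \<in> W"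
    using normal_form[OF fin W word_vec_vecs[OF w]] by auto
  assume "\<not> w' < w"
  have tw': "?t w' \<noteq> 0" using nz reducer_col[OF fin W w] by metis
  then have "w' \<in> normal_words X m W" using t(2) by (auto simp: supp_in_def)
  with \<open>\<not> w' < w\<close> w_lead have lt: "w < w'" by (cases "w' = w") auto
  obtain B where B: "B \<in> words X m" "?t B \<noteq> 0" "supp_le ?t B"
    using vecs_leading_word[OF fin t(1)] tw' by (metis zero_fun_def)
  have wB: "w < B" using lt B(3) tw' by (auto simp: supp_le_def)
  have "(word_vec w - ?t) B \<noteq> 0" "supp_le (word_vec w - ?t) B"
    using B(2,3) wB by (auto simp: supp_le_def word_vec_def split: if_splits)
  then have "B \<notin> normal_words X m W" using t(3) unfolding normal_words_def by blast
  moreover have "B \<in> normal_words X m W" using t(2) B(2) by (auto simp: supp_in_def)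
  ultimately show False by simp
qed

lemma reduction_op_reducer:
  assumes fin: "finite X" and W: "subspace X m W"
  shows "reduction_op X m (reducer X m W)"
proof -
  let ?T = "reducer X m W"
  have idem: "mcomp X m ?T ?T w' w = ?T w' w" for w' w
  proof (cases "w \<in> words X m")
    case True
    then show ?thesis
      using normal_form(1)[OF fin W word_vec_vecs[OF True]] mapply_reducer[OF fin W]
        normal_form_normal_form[OF fin W word_vec_vecs[OF True]] reducer_col[OF fin W True]
      by (simp add: mcomp_col) metis
  qed (simp add: mcomp_def reducer_def)
  have fixed: "(\<lambda>w'. ?T w' w) = word_vec w" if "w \<in> words X m" "w \<in> normal_words X m W" for w
    using that subspace_0[OF W] reducer_col[OF fin W that(1)]
      normal_form_eqI[OF fin W word_vec_vecs[OF that(1)], of "word_vec w"]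
    by (auto simp: supp_in_def word_vec_def)
  have "\<forall>w\<in>words X m. (\<lambda>w'. ?T w' w) = word_vec w \<or>
      (\<forall>w'\<in>words X m. ?T w' w \<noteq> 0 \<longrightarrow> lex_less w' w)"
    using fixed reducer_col_below[OF fin W] by (auto simp: lex_less_iff)
  moreover have "mat_ok X m ?T" by (simp add: mat_ok_def reducer_def)
  ultimately show ?thesis using idem by (simp add: reduction_op_def fun_eq_iff)
qed

lemma reduction_op_fixes_normal_words:
  assumes fin: "finite X" and W: "subspace X m W"
    and T: "reduction_op X m T" and kT: "ker X m T = W" and u: "u \<in> normal_words X m W"
  shows "(\<lambda>w'. T w' u) = word_vec u"
proof (rule ccontr)
  assume ne: "(\<lambda>w'. T w' u) \<noteq> word_vec u"
  have matok: "mat_ok X m T" and idem: "mcomp X m T T = T"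
    using T by (auto simp: reduction_op_def)
  have uW: "u \<in> words X m" using u by (simp add: normal_words_def)
  have lt: "w' < u" if "T w' u \<noteq> 0" for w'
    using that T uW ne matok by (auto simp: reduction_op_def mat_ok_def lex_less_iff)
  let ?c = "\<lambda>w'. T w' u"
  let ?y = "word_vec u - ?c"
  have "mapply X m T ?c = ?c"
    using mcomp_col[OF uW, of T T] idem by metis
  then have "mapply X m T ?y = 0"
    using mapply_diff[of X m T "word_vec u" ?c] mapply_word_vec[OF fin matok uW] by simp
  moreover have "?y \<in> vecs X m"
    using matok uW by (intro vecs_diff word_vec_vecs) (auto simp: mat_ok_def vecs_def)
  ultimately have yW: "?y \<in> W" using kT by (auto simp: ker_def zero_fun_def)
  have "?y u \<noteq> 0" using lt by (force simp: word_vec_def)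
  moreover have "supp_le ?y u"
    using lt by (auto simp: supp_le_def word_vec_def order_le_less split: if_splits)
  ultimately show False using u yW by (auto simp: normal_words_def)
qed

lemma reduction_op_unique:
  assumes fin: "finite X" and W: "subspace X m W"
    and T: "reduction_op X m T" and kT: "ker X m T = W"
  shows "T = reducer X m W"
proof -
  have matok: "mat_ok X m T" using T by (simp add: reduction_op_def)
  have app: "mapply X m T x = normal_form X m W x" if x: "x \<in> vecs X m" for x
  proof -
    let ?t = "normal_form X m W x"
    have t: "?t \<in> vecs X m" "supp_in ?t (normal_words X m W)" "x - ?t \<in> W"
      using normal_form[OF fin W x] by auto
    have "T w' u * ?t u = (if u = w' then ?t u else 0)" for w' u
    proof (cases "?t u = 0")
      case False
      then have "u \<in> normal_words X m W" using t(2) by (auto simp: supp_in_def)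
      from fun_cong[OF reduction_op_fixes_normal_words[OF fin W T kT this], of w']
      show ?thesis by (auto simp: word_vec_def)
    qed auto
    then have "mapply X m T ?t = ?t"
      using t(1) by (simp add: fun_eq_iff mapply_def vecs_outside sum.delta[OF finite_words[OF fin]])
    moreover have "mapply X m T (x - ?t) = 0" using t(3) kT by (auto simp: ker_def zero_fun_def)
    ultimately show ?thesis using mapply_diff[of X m T x ?t] by simp
  qed
  show ?thesis
  proof (intro ext)
    fix w' w
    show "T w' w = reducer X m W w' w"
    proof (cases "w \<in> words X m")
      case True
      have "T w' w = mapply X m T (word_vec w) w'" using mapply_word_vec[OF fin matok True] by simp
      also have "\<dots> = reducer X m W w' w"
        using app[OF word_vec_vecs[OF True]] reducer_col[OF fin W True] by metis
      finally show ?thesis .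
    qed (use matok in \<open>simp add: mat_ok_def reducer_def\<close>)
  qed
qed

lemma theta_inv_eq_reducer:
  assumes fin: "finite X" and W: "subspace X m W"
  shows "theta_inv X m W = reducer X m W"
  unfolding theta_inv_def
proof (rule the_equality)
  show "reduction_op X m (reducer X m W) \<and> ker X m (reducer X m W) = W"
    using reduction_op_reducer[OF fin W] ker_reducer[OF fin W] by blast
qed (use reduction_op_unique[OF fin W] in blast)

lemma ker_theta_inv:
  assumes fin: "finite X" and W: "subspace X m W"
  shows "ker X m (theta_inv X m W) = W"
  using ker_reducer[OF fin W] theta_inv_eq_reducer[OF fin W] by simp

section \<open>Slices and tensor subspaces\<close>

text \<open>\<open>slice v a b\<close> is the component of \<open>v\<close> in \<open>a \<otimes> V\<^sup>\<otimes>\<^sup>L \<otimes> b\<close>, read as a vector of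
  \<open>V\<^sup>\<otimes>\<^sup>L\<close>; it is the inverse of \<open>pad a _ b\<close>.\<close>

definition slice :: "('x list \<Rightarrow> 'k) \<Rightarrow> 'x list \<Rightarrow> 'x list \<Rightarrow> ('x list \<Rightarrow> 'k)" where
  "slice v a b = (\<lambda>u. v (a @ u @ b))"

lemma slice_apply [simp]: "slice v a b u = v (a @ u @ b)"
  by (simp add: slice_def)

lemma slice_slice: "slice (slice v a b) a' b' = slice v (a @ a') (b' @ b)"
  by (simp add: slice_def)

lemma slice_Nil [simp]: "slice v [] [] = v"
  by (simp add: slice_def)

lemma slice_vecs:
  assumes "v \<in> vecs X m" "m = i + L + j" "a \<in> words X i" "b \<in> words X j"
  shows "slice v a b \<in> vecs X L"
  using assms unfolding vecs_def by (auto simp: in_words)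

lemma pad_append:
  assumes "length a' = length a" "length b' = length b"
  shows "pad a g b (a' @ u @ b') = (if a' = a \<and> b' = b then g u else 0)"
  using assms by (simp add: pad_def)

lemma pad_decomp:
  assumes "length a + length b \<le> length x" "take (length a) x = a" "drop (length x - length b) x = b"
  shows "x = a @ drop (length a) (take (length x - length b) x) @ b"
proof -
  have "x = take (length x - length b) x @ b" using assms(3) by (metis append_take_drop_id)
  also have "take (length x - length b) x
      = take (length a) (take (length x - length b) x) @ drop (length a) (take (length x - length b) x)"
    by (rule append_take_drop_id[symmetric])
  also have "take (length a) (take (length x - length b) x) = a"
    using assms(1,2) by (simp add: min_def le_diff_conv2)
  finally show ?thesis by simp
qed

lemma pad_outside:
  assumes "a \<in> words X i" "b \<in> words X j" "g \<in> vecs X L" "x \<notin> words X (i + L + j)"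
  shows "pad a g b x = 0"
proof (cases "length a + length b \<le> length x \<and> take (length a) x = a \<and> drop (length x - length b) x = b")
  case True
  let ?mid = "drop (length a) (take (length x - length b) x)"
  have "?mid \<notin> words X L"
  proof
    assume "?mid \<in> words X L"
    then have "a @ ?mid @ b \<in> words X (i + L + j)" using assms(1,2) by (auto simp: in_words)
    then show False using pad_decomp True assms(4) by metis
  qed
  then show ?thesis using True assms(3) by (simp add: pad_def vecs_outside)
qed (auto simp: pad_def)

lemma pad_vecs:
  assumes "a \<in> words X i" "b \<in> words X j" "g \<in> vecs X L"
  shows "pad a g b \<in> vecs X (i + L + j)"
  using pad_outside[OF assms] by (auto simp: vecs_def)

lemma slice_pad:
  assumes "a \<in> words X i" "a' \<in> words X i" "b \<in> words X j" "b' \<in> words X j"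
  shows "slice (pad a' g b') a b = (if a = a' \<and> b = b' then g else 0)"
  using assms by (auto simp: slice_def pad_append in_words fun_eq_iff)

lemma sum_pad_slice:
  assumes fin: "finite X" and v: "v \<in> vecs X (i + L + j)"
  shows "v = (\<Sum>(a, b)\<in>words X i \<times> words X j. pad a (slice v a b) b)"
proof (rule ext)
  fix x
  let ?P = "words X i \<times> words X j"
  show "v x = (\<Sum>(a, b)\<in>?P. pad a (slice v a b) b) x"
  proof (cases "x \<in> words X (i + L + j)")
    case True
    let ?a = "take i x" and ?b = "drop (i + L) x" and ?u = "take L (drop i x)"
    have x: "x = ?a @ ?u @ ?b" by (rule take_mid_drop)
    have ab: "(?a, ?b) \<in> ?P" using True by (auto simp: in_words dest: in_set_takeD in_set_dropD)
    have pad_at: "pad a (slice v a b) b x = (if (a, b) = (?a, ?b) then v x else 0)"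
      if "(a, b) \<in> ?P" for a b
      using pad_append[of ?a a ?b b "slice v a b" ?u] that True x by (auto simp: in_words)
    have "(\<Sum>(a, b)\<in>?P. pad a (slice v a b) b) x = (\<Sum>p\<in>?P. if p = (?a, ?b) then v x else 0)"
      unfolding sum_fun_apply by (rule sum.cong[OF refl]) (use pad_at in \<open>auto split: prod.splits\<close>)
    also have "\<dots> = v x" using ab finite_words[OF fin] by (simp add: sum.delta')
    finally show ?thesis by simp
  next
    case False
    have "pad a (slice v a b) b x = 0" if "(a, b) \<in> ?P" for a b
      using that by (intro pad_outside[OF _ _ _ False]) (auto intro: slice_vecs[OF v])
    then show ?thesis using False v by (auto simp: sum_fun_apply case_prod_beta vecs_outside intro!: sum.neutral)
  qed
qed

lemma vecs_eqI_slices: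
  assumes fin: "finite X" and m: "m = i + L + j" and u: "u \<in> vecs X m" and v: "v \<in> vecs X m"
    and sl: "\<And>a b. a \<in> words X i \<Longrightarrow> b \<in> words X j \<Longrightarrow> slice u a b = slice v a b"
  shows "u = v"
proof -
  have "u = (\<Sum>(a, b)\<in>words X i \<times> words X j. pad a (slice u a b) b)"
    using sum_pad_slice[OF fin, of u i L j] u m by simp
  also have "\<dots> = (\<Sum>(a, b)\<in>words X i \<times> words X j. pad a (slice v a b) b)"
    by (rule sum.cong) (auto simp: sl)
  also have "\<dots> = v"
    using sum_pad_slice[OF fin, of v i L j] v m by simp
  finally show ?thesis .
qed

lemma tens_eq_slices:
  assumes fin: "finite X" and W: "subspace X L W" and m: "m = i + L + j"
  shows "tens X i W j = {v \<in> vecs X m. \<forall>a\<in>words X i. \<forall>b\<in>words X j. slice v a b \<in> W}"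
    (is "_ = ?S")
proof
  let ?G = "{pad a g b | a g b. a \<in> words X i \<and> g \<in> W \<and> b \<in> words X j}"
  have "?G \<subseteq> ?S"
  proof
    fix v assume "v \<in> ?G"
    then obtain a' g b' where v: "v = pad a' g b'" "a' \<in> words X i" "g \<in> W" "b' \<in> words X j"
      by blast
    have "slice v a b \<in> W" if "a \<in> words X i" "b \<in> words X j" for a b
      using slice_pad[OF that(1) v(2) that(2) v(4), of g] v(1,3) subspace_0[OF W] by simp
    then show "v \<in> ?S"
      using m pad_vecs[OF v(2,4) subspace_imp_vecs[OF W v(3)]] v(1) by blast
  qed
  moreover have "subspace X m ?S"
    unfolding subspace_def
  proof (intro conjI ballI allI)
    fix u v assume "u \<in> ?S" "v \<in> ?S"
    then show "u + v \<in> ?S"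
      using subspace_add[OF W] vecs_add[of u X m v] by (auto simp: slice_def plus_fun_def)
  next
    fix c v assume "v \<in> ?S"
    then show "scale c v \<in> ?S"
      using subspace_scale[OF W] vecs_scale[of v X m c] by (auto simp: slice_def scale_def)
  qed (use subspace_0[OF W] vecs_0[of X m] in \<open>auto simp: slice_def zero_fun_def\<close>)
  ultimately show "tens X i W j \<subseteq> ?S"
    unfolding tens_def by (rule lin_span_subset[rotated])
  show "?S \<subseteq> tens X i W j"
  proof
    fix v assume v: "v \<in> ?S"
    have "v = (\<Sum>(a, b)\<in>words X i \<times> words X j. pad a (slice v a b) b)"
      using sum_pad_slice[OF fin, of v i L j] v m by simp
    also have "\<dots> \<in> tens X i W j"
      unfolding tens_def using v finite_words[OF fin]
      by (intro lin_span_sum lin_span_base) (auto split: prod.splits intro!: exI)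
    finally show "v \<in> tens X i W j" .
  qed
qed

lemma subspace_tens:
  assumes "subspace X L W" "m = i + L + j"
  shows "subspace X m (tens X i W j)"
  unfolding tens_def
  by (rule subspace_lin_span) (use pad_vecs subspace_imp_vecs[OF assms(1)] assms(2) in blast)

lemma mapply_opmid:
  assumes fin: "finite X" and x: "x \<in> words X (i + k + j)"
  shows "mapply X (i + k + j) (opmid X k i A j) v x
       = mapply X k A (slice v (take i x) (drop (i + k) x)) (take k (drop i x))"
proof -
  let ?a = "take i x" and ?b = "drop (i + k) x" and ?u0 = "take k (drop i x)"
  let ?Wm = "words X (i + k + j)" and ?Wk = "words X k"
  have a: "?a \<in> words X i" and b: "?b \<in> words X j" and u0: "?u0 \<in> ?Wk"
    using x by (auto simp: in_words dest: in_set_takeD in_set_dropD)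
  have fiber: "{y \<in> ?Wm. take i y = ?a \<and> drop (i + k) y = ?b} = (\<lambda>u. ?a @ u @ ?b) ` ?Wk"
  proof
    show "(\<lambda>u. ?a @ u @ ?b) ` ?Wk \<subseteq> {y \<in> ?Wm. take i y = ?a \<and> drop (i + k) y = ?b}"
      using a b by (auto simp: in_words)
    show "{y \<in> ?Wm. take i y = ?a \<and> drop (i + k) y = ?b} \<subseteq> (\<lambda>u. ?a @ u @ ?b) ` ?Wk"
    proof
      fix y assume y: "y \<in> {y \<in> ?Wm. take i y = ?a \<and> drop (i + k) y = ?b}"
      then have "take k (drop i y) \<in> ?Wk"
        by (auto simp: in_words dest: in_set_takeD in_set_dropD)
      then show "y \<in> (\<lambda>u. ?a @ u @ ?b) ` ?Wk"
        using y take_mid_drop[of y i k] by (intro image_eqI[of _ _ "take k (drop i y)"]) auto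
    qed
  qed
  have inj: "inj_on (\<lambda>u. ?a @ u @ ?b) ?Wk" by (auto simp: inj_on_def)
  have "mapply X (i + k + j) (opmid X k i A j) v x
      = (\<Sum>y\<in>?Wm. if take i y = ?a \<and> drop (i + k) y = ?b then A ?u0 (take k (drop i y)) * v y else 0)"
    using x by (auto simp: mapply_def opmid_def intro!: sum.cong)
  also have "\<dots> = (\<Sum>y\<in>{y \<in> ?Wm. take i y = ?a \<and> drop (i + k) y = ?b}. A ?u0 (take k (drop i y)) * v y)"
    using finite_words[OF fin] by (simp add: sum.inter_filter)
  also have "\<dots> = (\<Sum>y\<in>(\<lambda>u. ?a @ u @ ?b) ` ?Wk. A ?u0 (take k (drop i y)) * v y)"
    by (simp only: fiber)
  also have "\<dots> = (\<Sum>u\<in>?Wk. A ?u0 u * v (?a @ u @ ?b))"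
    using a by (simp add: sum.reindex[OF inj] in_words)
  also have "\<dots> = mapply X k A (slice v ?a ?b) ?u0"
    using u0 by (simp add: mapply_def)
  finally show ?thesis .
qed

lemma slice_mapply_opmid:
  assumes fin: "finite X" and a: "a \<in> words X i" and b: "b \<in> words X j"
  shows "slice (mapply X (i + k + j) (opmid X k i A j) v) a b = mapply X k A (slice v a b)"
proof (rule ext)
  fix u
  show "slice (mapply X (i + k + j) (opmid X k i A j) v) a b u = mapply X k A (slice v a b) u"
  proof (cases "u \<in> words X k")
    case True
    then have x: "a @ u @ b \<in> words X (i + k + j)" using a b by (auto simp: in_words)
    show ?thesis using mapply_opmid[OF fin x] a b True by (simp add: in_words)
  next
    case False
    then have "a @ u @ b \<notin> words X (i + k + j)" using a b by (auto simp: in_words)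
    then show ?thesis using False by (simp add: mapply_def del: append_in_words)
  qed
qed

section \<open>The operator \<open>S\<close>\<close>

lemma lm_props:
  fixes X :: "'x::linorder set"
  assumes fin: "finite X" and f: "f \<in> vecs X N" "f \<noteq> 0"
  shows "lm X N f \<in> words X N" "f (lm X N f) \<noteq> 0" "supp_le f (lm X N f)"
proof -
  obtain B where B: "B \<in> words X N" "f B \<noteq> 0" "supp_le f B"
    using vecs_leading_word[OF fin f] by blast
  have "lm X N f = B" unfolding lm_def
  proof (rule the_equality)
    show "B \<in> words X N \<and> f B \<noteq> 0 \<and> (\<forall>u\<in>words X N. f u \<noteq> 0 \<longrightarrow> u = B \<or> lex_less u B)"
      using B by (auto simp: supp_le_def lex_less_iff order_le_less)
    fix w assume w: "w \<in> words X N \<and> f w \<noteq> 0 \<and> (\<forall>u\<in>words X N. f u \<noteq> 0 \<longrightarrow> u = w \<or> lex_less u w)"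
    then have "B \<le> w" using B by (auto simp: lex_less_iff order_le_less)
    moreover have "w \<le> B" using w B(3) by (auto simp: supp_le_def)
    ultimately show "w = B" by simp
  qed
  then show "lm X N f \<in> words X N" "f (lm X N f) \<noteq> 0" "supp_le f (lm X N f)"
    using B by simp_all
qed

locale finite_reduced_presentation =
  fixes X :: "'x::linorder set" and N :: nat and R :: "('x list \<Rightarrow> 'k::field) set"
  assumes finite_X: "finite X" and reduced: "reduced_presentation X N R"
begin

abbreviation LM :: "'x list set" where
  "LM \<equiv> lm X N ` R"

text \<open>The relation with a given leading word (well defined on \<open>LM\<close> since the presentation
  is reduced).\<close>

definition rel :: "'x list \<Rightarrow> ('x list \<Rightarrow> 'k)" where
  "rel w = (THE f. f \<in> R \<and> lm X N f = w)"

lemma R_vecs: "R \<subseteq> vecs X N"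
  using reduced by (simp add: reduced_presentation_def)

lemma R_props:
  assumes f: "f \<in> R"
  shows "lm X N f \<in> words X N" "f (lm X N f) = 1" "supp_le f (lm X N f)"
    "\<And>w. f w \<noteq> 0 \<Longrightarrow> w \<noteq> lm X N f \<Longrightarrow> w \<notin> LM"
proof -
  have fv: "f \<in> vecs X N" using R_vecs f by blast
  have f0: "f \<noteq> 0" and f1: "f (lm X N f) = 1"
    using reduced f by (auto simp: reduced_presentation_def zero_fun_def)
  show "lm X N f \<in> words X N" "f (lm X N f) = 1" "supp_le f (lm X N f)"
    using lm_props[OF finite_X fv f0] f1 by auto
  show "\<And>w. f w \<noteq> 0 \<Longrightarrow> w \<noteq> lm X N f \<Longrightarrow> w \<notin> LM"
    using reduced f fv vecs_outside[OF fv] unfolding reduced_presentation_def by blast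
qed

lemma rel_props:
  assumes "w \<in> LM"
  shows "rel w \<in> R" "lm X N (rel w) = w"
proof -
  obtain f where f: "f \<in> R" "w = lm X N f" using assms by blast
  have "rel w = f" unfolding rel_def
    by (rule the_equality) (use f reduced in \<open>auto simp: reduced_presentation_def\<close>)
  then show "rel w \<in> R" "lm X N (rel w) = w" using f by simp_all
qed

lemma rel_lm: "f \<in> R \<Longrightarrow> rel (lm X N f) = f"
  using rel_props reduced by (auto simp: reduced_presentation_def)

lemma LM_words: "LM \<subseteq> words X N"
  using R_props(1) by blast

lemma finite_LM: "finite LM"
  using finite_subset[OF LM_words finite_words[OF finite_X]] .

lemma rel_at_LM:
  assumes w: "w \<in> LM" and w': "w' \<in> LM"
  shows "rel w w' = (if w' = w then 1 else 0)"
  using R_props(2,4)[OF rel_props(1)[OF w]] rel_props(2)[OF w] w' by auto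

lemma mapply_Smat:
  "mapply X N (Smat X N R) v =
    (\<lambda>w'. if w' \<in> words X N then v w' - (\<Sum>w\<in>LM. v w * rel w w') else 0)"
proof (rule ext)
  fix w'
  let ?W = "words X N"
  show "mapply X N (Smat X N R) v w' = (if w' \<in> ?W then v w' - (\<Sum>w\<in>LM. v w * rel w w') else 0)"
  proof (cases "w' \<in> ?W")
    case True
    have "mapply X N (Smat X N R) v w'
        = (\<Sum>w\<in>?W. (if w = w' then v w else 0) - (if w \<in> LM then v w * rel w w' else 0))"
      using True by (auto simp: mapply_def Smat_def word_vec_def rel_def algebra_simps intro!: sum.cong)
    also have "\<dots> = v w' - (\<Sum>w\<in>?W \<inter> LM. v w * rel w w')"
      using True finite_words[OF finite_X]
      by (simp add: sum_subtractf sum.delta' sum.inter_restrict)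
    also have "?W \<inter> LM = LM" using LM_words by blast
    finally show ?thesis using True by simp
  qed (simp add: mapply_def)
qed

lemma mapply_Smat_LM: "w' \<in> LM \<Longrightarrow> mapply X N (Smat X N R) v w' = 0"
  using LM_words finite_LM
  by (auto simp: mapply_Smat rel_at_LM if_distrib[of "\<lambda>x. _ * x"] sum.delta cong: if_cong)

lemma Smat_idem:
  "mapply X N (Smat X N R) (mapply X N (Smat X N R) v) = mapply X N (Smat X N R) v"
proof -
  have "(\<Sum>w\<in>LM. mapply X N (Smat X N R) v w * rel w w') = 0" for w'
    using mapply_Smat_LM by simp
  then show ?thesis
    by (subst (1) mapply_Smat) (auto simp: fun_eq_iff vecs_outside[OF mapply_vecs])
qed

lemma mapply_Smat_R:
  assumes f: "f \<in> R"
  shows "mapply X N (Smat X N R) f = 0"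
proof -
  have "f w * rel w w' = (if w = lm X N f then f w' else 0)" if "w \<in> LM" for w w'
    using R_props(2)[OF f] R_props(4)[OF f, of w] rel_lm[OF f] that by auto
  then have "(\<Sum>w\<in>LM. f w * rel w w') = f w'" for w'
    using finite_LM f by (simp add: sum.delta')
  then show ?thesis by (simp add: mapply_Smat fun_eq_iff)
qed

lemma subspace_Rbar: "subspace X N (Rbar X R)"
  unfolding Rbar_def by (rule subspace_lin_span[OF R_vecs])

lemma mapply_Smat_eq_0_iff:
  assumes v: "v \<in> vecs X N"
  shows "mapply X N (Smat X N R) v = 0 \<longleftrightarrow> v \<in> Rbar X R"
proof
  assume "v \<in> Rbar X R"
  then obtain F c where F: "finite F" "F \<subseteq> R" "v = (\<Sum>f\<in>F. scale (c f) f)"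
    unfolding Rbar_def by (rule lin_span_eq_sum_scale)
  then have "mapply X N (Smat X N R) v = (\<Sum>f\<in>F. scale (c f) (mapply X N (Smat X N R) f))"
    by (simp add: mapply_sum mapply_scale)
  also have "\<dots> = 0"
    using F(2) mapply_Smat_R by (intro sum.neutral) (auto simp: fun_eq_iff)
  finally show "mapply X N (Smat X N R) v = 0" .
next
  assume S0: "mapply X N (Smat X N R) v = 0"
  have eq: "v = (\<lambda>w'. \<Sum>w\<in>LM. v w * rel w w')"
  proof (rule ext)
    fix w'
    show "v w' = (\<Sum>w\<in>LM. v w * rel w w')"
    proof (cases "w' \<in> words X N")
      case True
      then show ?thesis using fun_cong[OF S0, of w'] by (simp add: mapply_Smat)
    next
      case False
      have "rel w w' = 0" if "w \<in> LM" for w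
        using rel_props(1)[OF that] R_vecs False vecs_outside by blast
      then show ?thesis using False v by (simp add: vecs_outside)
    qed
  qed
  have inj: "inj_on rel LM" using rel_props(2) by (metis inj_onI)
  have "(\<lambda>w'. \<Sum>w\<in>LM. v w * rel w w') = (\<lambda>w'. \<Sum>f\<in>rel ` LM. v (lm X N f) * f w')"
    by (simp add: sum.reindex[OF inj] rel_props)
  moreover have "rel ` LM \<subseteq> R" using rel_props by blast
  ultimately show "v \<in> Rbar X R" unfolding Rbar_def lin_span_def
    using eq finite_LM by (intro CollectI exI[of _ "rel ` LM"] exI[of _ "\<lambda>f. v (lm X N f)"]) auto
qed

lemma Smat_triangular: "Smat X N R w' w \<noteq> 0 \<Longrightarrow> w' \<le> w"
proof (cases "w \<in> LM \<and> w' \<noteq> w")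
  case True
  assume "Smat X N R w' w \<noteq> 0"
  then have "rel w w' \<noteq> 0" using True by (auto simp: Smat_def word_vec_def rel_def split: if_splits)
  then show ?thesis using R_props(3)[OF rel_props(1)] rel_props(2) True by (auto simp: supp_le_def)
qed (auto simp: Smat_def word_vec_def split: if_splits)

lemma Smat_col_irreducible: "w \<in> words X N \<Longrightarrow> w \<notin> LM \<Longrightarrow> Smat X N R w' w = word_vec w w'"
  by (auto simp: Smat_def word_vec_def)

end

fun alt_apply :: "'x set \<Rightarrow> nat \<Rightarrow> ('x list \<Rightarrow> 'x list \<Rightarrow> 'k::field) \<Rightarrow> ('x list \<Rightarrow> 'x list \<Rightarrow> 'k) \<Rightarrow>
    nat \<Rightarrow> ('x list \<Rightarrow> 'k) \<Rightarrow> ('x list \<Rightarrow> 'k)" where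
  "alt_apply X m t s 0 v = v"
| "alt_apply X m t s (Suc k) v = mapply X m (if even k then s else t) (alt_apply X m t s k v)"

lemma mapply_braid:
  "finite X \<Longrightarrow> v \<in> vecs X m \<Longrightarrow> mapply X m (braid X m t s k) v = alt_apply X m t s k v"
  by (induction k) (simp_all add: mapply_midentity mapply_mcomp)

lemma alt_apply_add: "alt_apply X m t s k (u + v) = alt_apply X m t s k u + alt_apply X m t s k v"
  by (induction k) (simp_all only: alt_apply.simps mapply_add)

lemma alt_apply_vecs: "v \<in> vecs X m \<Longrightarrow> alt_apply X m t s k v \<in> vecs X m"
  by (cases k) simp_all

lemma slice_alt_apply:
  assumes "\<And>y. slice (mapply X m T1 y) a b = mapply X L T1' (slice y a b)"
    and "\<And>y. slice (mapply X m T2 y) a b = mapply X L T2' (slice y a b)"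
  shows "slice (alt_apply X m T1 T2 k v) a b = alt_apply X L T1' T2' k (slice v a b)"
proof (induction k)
  case (Suc k)
  then show ?case by (cases "even k") (simp_all only: alt_apply.simps if_True if_False assms)
qed (simp only: alt_apply.simps)

section \<open>The operators \<open>S\<^sub>i\<^sup>(\<^sup>m\<^sup>)\<close>\<close>

context finite_reduced_presentation
begin

definition Rtens :: "nat \<Rightarrow> nat \<Rightarrow> ('x list \<Rightarrow> 'k) set" where
  "Rtens m i = tens X i (Rbar X R) (m - N - i)"

definition reducible_at :: "nat \<Rightarrow> 'x list \<Rightarrow> bool" where
  "reducible_at i w \<longleftrightarrow> take N (drop i w) \<in> LM"

lemma mapply_Sop:
  assumes im: "i + N \<le> m" and x: "x \<in> words X m"
  shows "mapply X m (Sop X N R m i) v x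
       = mapply X N (Smat X N R) (slice v (take i x) (drop (i + N) x)) (take N (drop i x))"
  using mapply_opmid[OF finite_X, of x i N "m - N - i"] im x by (simp add: Sop_def)

lemma slice_mapply_Sop_shift:
  assumes pi: "p \<le> i" and iL: "i + N \<le> p + L" and m: "m = p + L + q"
    and a: "a \<in> words X p" and b: "b \<in> words X q"
  shows "slice (mapply X m (Sop X N R m i) v) a b = mapply X L (Sop X N R L (i - p)) (slice v a b)"
proof (rule ext)
  fix u
  show "slice (mapply X m (Sop X N R m i) v) a b u = mapply X L (Sop X N R L (i - p)) (slice v a b) u"
  proof (cases "u \<in> words X L")
    case True
    have la: "length a = p" and lu: "length u = L"
      using a True by (auto simp: in_words)
    have x: "a @ u @ b \<in> words X m" using a b True m by (auto simp: in_words)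
    have "take i (a @ u @ b) = a @ take (i - p) u" "drop (i + N) (a @ u @ b) = drop (i - p + N) u @ b"
      "take N (drop i (a @ u @ b)) = take N (drop (i - p) u)"
      using la lu pi iL by simp_all
    then show ?thesis
      using mapply_Sop[OF _ x, of i v] mapply_Sop[OF _ True, of "i - p" "slice v a b"] pi iL m
      by (simp add: slice_slice)
  next
    case False
    then have "a @ u @ b \<notin> words X m" using a b m by (auto simp: in_words)
    then show ?thesis using False by (simp add: mapply_def del: append_in_words)
  qed
qed

lemma slice_mapply_Sop:
  assumes im: "i + N \<le> m" and a: "a \<in> words X i" and b: "b \<in> words X (m - N - i)"
  shows "slice (mapply X m (Sop X N R m i) v) a b = mapply X N (Smat X N R) (slice v a b)"
proof -
  have "slice (mapply X m (Sop X N R m i) v) a b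
      = slice (mapply X (i + N + (m - N - i)) (opmid X N i (Smat X N R) (m - N - i)) v) a b"
    using im by (simp add: Sop_def)
  also have "\<dots> = mapply X N (Smat X N R) (slice v a b)"
    by (rule slice_mapply_opmid[OF finite_X a b])
  finally show ?thesis .
qed

lemma Rtens_eq_slices:
  assumes im: "i + N \<le> m"
  shows "Rtens m i = {v \<in> vecs X m. \<forall>a\<in>words X i. \<forall>b\<in>words X (m - N - i). slice v a b \<in> Rbar X R}"
  unfolding Rtens_def by (rule tens_eq_slices[OF finite_X subspace_Rbar]) (use im in simp)

lemma subspace_Rtens: "i + N \<le> m \<Longrightarrow> subspace X m (Rtens m i)"
  unfolding Rtens_def by (rule subspace_tens[OF subspace_Rbar]) simp

lemma Rtens_vecs: "i + N \<le> m \<Longrightarrow> v \<in> Rtens m i \<Longrightarrow> v \<in> vecs X m"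
  using subspace_Rtens subspace_imp_vecs by blast

lemma Sop_idem:
  assumes im: "i + N \<le> m"
  shows "mapply X m (Sop X N R m i) (mapply X m (Sop X N R m i) v) = mapply X m (Sop X N R m i) v"
  by (rule vecs_eqI_slices[OF finite_X, of m i N "m - N - i"])
    (use im in \<open>simp_all add: slice_mapply_Sop Smat_idem\<close>)

lemma mapply_Sop_eq_0_iff:
  assumes im: "i + N \<le> m" and v: "v \<in> vecs X m"
  shows "mapply X m (Sop X N R m i) v = 0 \<longleftrightarrow> v \<in> Rtens m i"
proof -
  have sl: "slice v a b \<in> vecs X N" if "a \<in> words X i" "b \<in> words X (m - N - i)" for a b
    using slice_vecs[OF v _ that] im by simp
  have "mapply X m (Sop X N R m i) v = 0 \<longleftrightarrow>
      (\<forall>a\<in>words X i. \<forall>b\<in>words X (m - N - i). slice (mapply X m (Sop X N R m i) v) a b = slice 0 a b)"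
    using vecs_eqI_slices[OF finite_X, of m i N "m - N - i" "mapply X m (Sop X N R m i) v" 0] im
    by auto
  also have "\<dots> \<longleftrightarrow> (\<forall>a\<in>words X i. \<forall>b\<in>words X (m - N - i). slice v a b \<in> Rbar X R)"
    using slice_mapply_Sop[OF im] mapply_Smat_eq_0_iff[OF sl] by (auto simp: slice_def zero_fun_def)
  finally show ?thesis using Rtens_eq_slices[OF im] v by blast
qed

lemma ker_Sop:
  assumes im: "i + N \<le> m"
  shows "ker X m (Sop X N R m i) = Rtens m i"
  using mapply_Sop_eq_0_iff[OF im] Rtens_vecs[OF im] by (auto simp: ker_def zero_fun_def)

lemma diff_mapply_Sop_Rtens:
  assumes im: "i + N \<le> m" and v: "v \<in> vecs X m"
  shows "v - mapply X m (Sop X N R m i) v \<in> Rtens m i"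
proof -
  have "mapply X m (Sop X N R m i) (v - mapply X m (Sop X N R m i) v) = 0"
    by (simp add: mapply_diff Sop_idem[OF im])
  then show ?thesis using mapply_Sop_eq_0_iff[OF im vecs_diff[OF v mapply_vecs]] by simp
qed

lemma Sop_triangular: "Sop X N R m i x y \<noteq> 0 \<Longrightarrow> x \<le> y"
proof -
  assume ne: "Sop X N R m i x y \<noteq> 0"
  have c: "x \<in> words X (i + N + (m - N - i))" "y \<in> words X (i + N + (m - N - i))"
    "take i x = take i y" "drop (i + N) x = drop (i + N) y"
    "Smat X N R (take N (drop i x)) (take N (drop i y)) \<noteq> 0"
    using ne by (auto simp: Sop_def opmid_def split: if_splits)
  have "take i x @ take N (drop i x) @ drop (i + N) x \<le> take i x @ take N (drop i y) @ drop (i + N) x"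
    using Smat_triangular[OF c(5)] c(1,2) by (intro le_list_append_mono) (auto simp: in_words)
  then show "x \<le> y" using take_mid_drop[of x i N] take_mid_drop[of y i N] c(3,4) by simp
qed

lemma supp_le_mapply_Sop: "supp_le v B \<Longrightarrow> supp_le (mapply X m (Sop X N R m i) v) B"
  by (rule supp_le_mapply_triangular[OF Sop_triangular])

lemma mapply_Sop_reducible:
  assumes im: "i + N \<le> m" and r: "reducible_at i x"
  shows "mapply X m (Sop X N R m i) v x = 0"
proof (cases "x \<in> words X m")
  case True
  show ?thesis using mapply_Sop[OF im True] mapply_Smat_LM r by (simp add: reducible_at_def)
qed (simp add: mapply_def)

lemma Sop_col_irreducible:
  assumes im: "i + N \<le> m" and w: "w \<in> words X m" and r: "\<not> reducible_at i w"
  shows "Sop X N R m i w' w = word_vec w w'"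
proof -
  have wN: "take N (drop i w) \<in> words X N"
    using w im by (auto simp: in_words dest: in_set_takeD in_set_dropD)
  show ?thesis
  proof (cases "w' \<in> words X m \<and> take i w' = take i w \<and> drop (i + N) w' = drop (i + N) w")
    case True
    have "(take N (drop i w') = take N (drop i w)) = (w' = w)"
      using take_mid_drop[of w' i N] take_mid_drop[of w i N] True by metis
    then show ?thesis
      using True w im Smat_col_irreducible[OF wN] r
      by (simp add: Sop_def opmid_def word_vec_def reducible_at_def)
  next
    case False
    then have "w' \<noteq> w" using w by auto
    then show ?thesis using False im by (auto simp: Sop_def opmid_def word_vec_def)
  qed
qed

lemma Rtens_leading_word_reducible:
  assumes im: "i + N \<le> m" and v: "v \<in> Rtens m i" and w: "w \<in> words X m"
    and vw: "v w \<noteq> 0" and s: "supp_le v w"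
  shows "reducible_at i w"
proof (rule ccontr)
  assume r: "\<not> reducible_at i w"
  have "Sop X N R m i w y * v y = (if y = w then v y else 0)" for y
  proof (cases "y = w")
    case False
    show ?thesis
    proof (cases "v y = 0")
      case False
      then have "y < w" using s \<open>y \<noteq> w\<close> by (auto simp: supp_le_def)
      then show ?thesis using Sop_triangular[of m i w y] \<open>y \<noteq> w\<close> by (auto dest: leD)
    qed (use False in simp)
  next
    case True
    then show ?thesis using Sop_col_irreducible[OF im w r, of w] by (simp add: word_vec_def)
  qed
  then have "mapply X m (Sop X N R m i) v w = v w"
    using w finite_words[OF finite_X] by (simp add: mapply_def sum.delta')
  moreover have "mapply X m (Sop X N R m i) v = 0"
    using mapply_Sop_eq_0_iff[OF im Rtens_vecs[OF im v]] v by simp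
  ultimately show False using vw by simp
qed

lemma reducible_at_Rtens_elem:
  assumes im: "i + N \<le> m" and w: "w \<in> words X m" and r: "reducible_at i w"
  defines "g \<equiv> word_vec w - mapply X m (Sop X N R m i) (word_vec w)"
  shows "g \<in> Rtens m i" "g w = 1" "supp_le g w"
  unfolding g_def
  using diff_mapply_Sop_Rtens[OF im word_vec_vecs[OF w]] mapply_Sop_reducible[OF im r]
    supp_le_diff[OF supp_le_word_vec supp_le_mapply_Sop[OF supp_le_word_vec]]
  by (auto simp: word_vec_def)

end

section \<open>Bounded decompositions in sums of subspaces\<close>

definition standard_pair :: "('x::linorder list \<Rightarrow> 'k::field) set \<Rightarrow> ('x list \<Rightarrow> 'k) set \<Rightarrow> bool" where
  "standard_pair E F \<longleftrightarrow> (\<forall>e\<in>E. \<forall>f\<in>F. \<forall>M. supp_lt (e + f) M \<longrightarrow>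
     (\<exists>p\<in>E. \<exists>q\<in>F. e + f = p + q \<and> supp_lt p M \<and> supp_lt q M))"

lemma standard_pair_commute: "standard_pair E F \<Longrightarrow> standard_pair F E"
  unfolding standard_pair_def by (metis add.commute)

lemma common_leading_word:
  fixes X :: "'x::linorder set"
  assumes fin: "finite X" and fv: "\<And>i. i \<in> I \<Longrightarrow> f i \<in> vecs X m"
    and nz: "\<exists>i\<in>I. f i \<noteq> 0"
  obtains M where "M \<in> words X m" "\<exists>i\<in>I. f i M \<noteq> 0" "\<And>i. i \<in> I \<Longrightarrow> supp_le (f i) M"
proof -
  let ?Z = "\<Union>i\<in>I. {w. f i w \<noteq> 0}"
  have sub: "?Z \<subseteq> words X m" using fv by (auto simp: vecs_def)
  have finZ: "finite ?Z" using finite_subset[OF sub finite_words[OF fin]] .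
  have "?Z \<noteq> {}" using nz by (auto simp: fun_eq_iff)
  then show ?thesis
    using that[of "Max ?Z"] Max_in[OF finZ] Max_ge[OF finZ] sub by (auto simp: supp_le_def)
qed

lemma sum_scale_pivot:
  assumes "finite K" "i0 \<in> K" "sum c K = 0"
  shows "(\<Sum>i\<in>K. scale (c i) (g i)) = (\<Sum>i\<in>K - {i0}. scale (c i) (g i - g i0))"
proof (rule ext)
  fix w
  have "c i0 = - (\<Sum>i\<in>K - {i0}. c i)"
    using assms sum.remove[OF assms(1,2), of c] by (simp add: eq_neg_iff_add_eq_0)
  have "(\<Sum>i\<in>K. c i * g i w) = c i0 * g i0 w + (\<Sum>i\<in>K - {i0}. c i * g i w)"
    by (rule sum.remove[OF assms(1,2)])
  also have "\<dots> = (\<Sum>i\<in>K - {i0}. c i * g i w) - (\<Sum>i\<in>K - {i0}. c i) * g i0 w"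
    using \<open>c i0 = _\<close> by simp
  also have "\<dots> = (\<Sum>i\<in>K - {i0}. c i * (g i w - g i0 w))"
    by (simp add: right_diff_distrib sum_subtractf sum_distrib_right)
  finally show "(\<Sum>i\<in>K. scale (c i) (g i)) w = (\<Sum>i\<in>K - {i0}. scale (c i) (g i - g i0)) w"
    by (simp add: sum_fun_apply)
qed

lemma standard_pair_diff_below:
  assumes std: "standard_pair E F" and F: "subspace X m F" and e: "e \<in> E" and f: "f \<in> F"
    and M: "supp_le e M" "supp_le f M" "e M = f M"
  shows "\<exists>p q. p \<in> E \<and> q \<in> F \<and> e - f = p + q \<and> supp_lt p M \<and> supp_lt q M"
proof -
  have "supp_lt (e + - f) M" using M by (intro supp_le_imp_lt supp_le_add supp_le_uminus) auto
  then show ?thesis using std e subspace_uminus[OF F f] unfolding standard_pair_def by fastforce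
qed

text \<open>Pivoting on one summand \<open>i\<^sub>0\<close>, a sum whose top coefficients cancel is a combination of the
  differences \<open>g\<^sub>i - g\<^sub>i\<^sub>0\<close> of the normalised summands, each of which splits below the top since
  \<open>(E\<^sub>i, E\<^sub>i\<^sub>0)\<close> is a standard pair.\<close>

lemma sum_family_cancel_top:
  fixes E :: "nat \<Rightarrow> ('x::linorder list \<Rightarrow> 'k::field) set"
  assumes finK: "finite K" and i0: "i0 \<in> K" and sub: "\<And>i. i \<in> K \<Longrightarrow> subspace X m (E i)"
    and std: "\<And>i j. i \<in> K \<Longrightarrow> j \<in> K \<Longrightarrow> i \<noteq> j \<Longrightarrow> standard_pair (E i) (E j)"
    and fE: "\<And>i. i \<in> K \<Longrightarrow> f i \<in> E i" and fM: "\<And>i. i \<in> K \<Longrightarrow> supp_le (f i) M"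
    and nz: "\<And>i. i \<in> K \<Longrightarrow> f i M \<noteq> 0" and top: "sum f K M = 0"
  obtains f' where "\<And>i. i \<in> K \<Longrightarrow> f' i \<in> E i" "\<And>i. i \<in> K \<Longrightarrow> supp_lt (f' i) M" "sum f' K = sum f K"
proof -
  define A where "A = K - {i0}"
  define g where "g i = scale (1 / f i M) (f i)" for i
  have f_g: "f i = scale (f i M) (g i)" if "i \<in> K" for i using nz[OF that] by (auto simp: g_def fun_eq_iff)
  have gE: "g i \<in> E i" if "i \<in> K" for i unfolding g_def using that fE by (auto intro: subspace_scale[OF sub])
  have split: "\<forall>i\<in>A. \<exists>p q. p \<in> E i \<and> q \<in> E i0 \<and> g i - g i0 = p + q \<and> supp_lt p M \<and> supp_lt q M"
  proof
    fix i assume "i \<in> A"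
    then have iK: "i \<in> K" and ne: "i \<noteq> i0" by (auto simp: A_def)
    have "supp_le (g j) M" "g j M = 1" if "j \<in> K" for j
      using that fM nz by (auto simp: g_def intro: supp_le_scale)
    then show "\<exists>p q. p \<in> E i \<and> q \<in> E i0 \<and> g i - g i0 = p + q \<and> supp_lt p M \<and> supp_lt q M"
      using standard_pair_diff_below[OF std[OF iK i0 ne] sub[OF i0] gE[OF iK] gE[OF i0]] iK i0
      by auto
  qed
  obtain p where "\<forall>i\<in>A. \<exists>q. p i \<in> E i \<and> q \<in> E i0 \<and> g i - g i0 = p i + q
      \<and> supp_lt (p i) M \<and> supp_lt q M"
    using bchoice[OF split] by blast
  from bchoice[OF this] obtain q where "\<forall>i\<in>A. p i \<in> E i \<and> q i \<in> E i0 \<and> g i - g i0 = p i + q i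
      \<and> supp_lt (p i) M \<and> supp_lt (q i) M"
    by blast
  then have pq: "p i \<in> E i" "q i \<in> E i0" "g i - g i0 = p i + q i" "supp_lt (p i) M" "supp_lt (q i) M"
    if "i \<in> A" for i
    using that by blast+
  define f' where "f' i = (if i = i0 then (\<Sum>j\<in>A. scale (f j M) (q j)) else scale (f i M) (p i))" for i
  have "f' i \<in> E i \<and> supp_lt (f' i) M" if "i \<in> K" for i
  proof (cases "i = i0")
    case True
    have "(\<Sum>j\<in>A. scale (f j M) (q j)) \<in> E i0"
      using pq finK by (intro subspace_sum[OF sub[OF i0]] subspace_scale[OF sub[OF i0]]) (auto simp: A_def)
    moreover have "supp_lt (\<Sum>j\<in>A. scale (f j M) (q j)) M"
      using pq finK by (intro supp_lt_sum supp_lt_scale) (auto simp: A_def)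
    ultimately show ?thesis using True by (simp add: f'_def)
  next
    case False
    then have "i \<in> A" using that by (simp add: A_def)
    then show ?thesis
      using pq False by (simp add: f'_def subspace_scale[OF sub[OF that]] supp_lt_scale)
  qed
  moreover have "sum f' K = sum f K"
  proof -
    have "sum f' K = (\<Sum>i\<in>A. scale (f i M) (p i + q i))"
      using sum.remove[OF finK i0, of f'] unfolding A_def[symmetric]
      by (simp add: f'_def A_def scale_add_right sum.distrib add.commute)
    also have "\<dots> = (\<Sum>i\<in>K. scale (f i M) (g i))"
      using sum_scale_pivot[OF finK i0, of "\<lambda>i. f i M" g] pq(3) top by (simp add: A_def sum_fun_apply)
    also have "\<dots> = sum f K" using f_g by simp
    finally show ?thesis .
  qed
  ultimately show ?thesis using that by blast
qed

lemma sum_family_lower_top: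
  fixes E :: "nat \<Rightarrow> ('x::linorder list \<Rightarrow> 'k::field) set"
  assumes finI: "finite I" and sub: "\<And>i. i \<in> I \<Longrightarrow> subspace X m (E i)"
    and std: "\<And>i j. i \<in> I \<Longrightarrow> j \<in> I \<Longrightarrow> i \<noteq> j \<Longrightarrow> standard_pair (E i) (E j)"
    and fE: "\<And>i. i \<in> I \<Longrightarrow> f i \<in> E i" and fM: "\<And>i. i \<in> I \<Longrightarrow> supp_le (f i) M"
    and top: "sum f I M = 0"
  obtains f' where "\<And>i. i \<in> I \<Longrightarrow> f' i \<in> E i" "\<And>i. i \<in> I \<Longrightarrow> supp_lt (f' i) M" "sum f' I = sum f I"
proof -
  define J where "J = {i \<in> I. f i M \<noteq> 0}"
  have JI: "J \<subseteq> I" by (auto simp: J_def)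
  have finJ: "finite J" using finite_subset[OF JI finI] .
  show ?thesis
  proof (cases "J = {}")
    case True
    then show ?thesis using that[of f] fE fM by (auto simp: J_def intro: supp_le_imp_lt)
  next
    case False
    then obtain i0 where i0: "i0 \<in> J" by blast
    have "sum f J M = sum f I M"
      using sum.mono_neutral_left[OF finI JI, of "\<lambda>i. f i M"] by (auto simp: J_def sum_fun_apply)
    then have "sum f J M = 0" using top by simp
    moreover have "subspace X m (E i)" "f i \<in> E i" "supp_le (f i) M" "f i M \<noteq> 0" if "i \<in> J" for i
      using that sub fE fM by (auto simp: J_def)
    moreover have "standard_pair (E i) (E j)" if "i \<in> J" "j \<in> J" "i \<noteq> j" for i j
      using that std JI by blast
    ultimately obtain h where h: "\<And>i. i \<in> J \<Longrightarrow> h i \<in> E i" "\<And>i. i \<in> J \<Longrightarrow> supp_lt (h i) M"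
      and sum_h: "sum h J = sum f J"
      using sum_family_cancel_top[OF finJ i0, where E=E and f=f and M=M] by blast
    define f' where "f' i = (if i \<in> J then h i else f i)" for i
    have "sum f' I = sum f I"
      using sum.subset_diff[OF JI finI, of f'] sum.subset_diff[OF JI finI, of f] sum_h
      by (simp add: f'_def)
    moreover have "f' i \<in> E i" "supp_lt (f' i) M" if "i \<in> I" for i
      using that h fE fM by (auto simp: f'_def J_def intro: supp_le_imp_lt)
    ultimately show ?thesis using that by blast
  qed
qed

lemma sum_family_bounded_decomp_below:
  fixes X :: "'x::linorder set" and E :: "nat \<Rightarrow> ('x list \<Rightarrow> 'k::field) set"
  assumes fin: "finite X" and finI: "finite I"
    and sub: "\<And>i. i \<in> I \<Longrightarrow> subspace X m (E i)"
    and std: "\<And>i j. i \<in> I \<Longrightarrow> j \<in> I \<Longrightarrow> i \<noteq> j \<Longrightarrow> standard_pair (E i) (E j)"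
    and M: "M \<in> words X m"
  shows "\<forall>f. (\<forall>i\<in>I. f i \<in> E i \<and> supp_le (f i) M) \<and> supp_le (sum f I) B \<longrightarrow>
    (\<exists>e'. (\<forall>i\<in>I. e' i \<in> E i \<and> supp_le (e' i) B) \<and> sum e' I = sum f I)"
  using fin M
proof (induction M rule: words_less_induct)
  case (less M)
  have vE: "v \<in> vecs X m" if "i \<in> I" "v \<in> E i" for i v using sub that subspace_imp_vecs by blast
  show ?case
  proof (intro allI impI)
    fix f assume f: "(\<forall>i\<in>I. f i \<in> E i \<and> supp_le (f i) M) \<and> supp_le (sum f I) B"
    then have fE: "\<And>i. i \<in> I \<Longrightarrow> f i \<in> E i" and fM: "\<And>i. i \<in> I \<Longrightarrow> supp_le (f i) M" by auto
    show "\<exists>e'. (\<forall>i\<in>I. e' i \<in> E i \<and> supp_le (e' i) B) \<and> sum e' I = sum f I"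
    proof (cases "M \<le> B")
      case True
      then show ?thesis using f by (intro exI[of _ f]) (auto intro: supp_le_mono)
    next
      case False
      then have "sum f I M = 0" using f by (auto simp: supp_le_def)
      then obtain f' where f'E: "\<And>i. i \<in> I \<Longrightarrow> f' i \<in> E i"
        and f'M: "\<And>i. i \<in> I \<Longrightarrow> supp_lt (f' i) M" and f'sum: "sum f' I = sum f I"
        using sum_family_lower_top[where X=X and m=m and E=E and I=I and f=f and M=M,
            OF finI sub std fE fM] by blast
      show ?thesis
      proof (cases "\<exists>i\<in>I. f' i \<noteq> 0")
        case True
        then obtain M' where M': "M' \<in> words X m" "\<exists>i\<in>I. f' i M' \<noteq> 0" "\<And>i. i \<in> I \<Longrightarrow> supp_le (f' i) M'"
          using common_leading_word[where f=f' and m=m and I=I, OF fin] vE f'E by blast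
        have "M' < M" using f'M M'(2) by (auto simp: supp_lt_def)
        moreover have "(\<forall>i\<in>I. f' i \<in> E i \<and> supp_le (f' i) M') \<and> supp_le (sum f' I) B"
          using M'(3) f'E f'sum f by simp
        ultimately show ?thesis using less.IH[OF M'(1)] f'sum by metis
      next
        case False
        then show ?thesis using f'E f'sum by (intro exI[of _ f']) auto
      qed
    qed
  qed
qed

lemma sum_family_bounded_decomp:
  fixes X :: "'x::linorder set" and E :: "nat \<Rightarrow> ('x list \<Rightarrow> 'k::field) set"
  assumes fin: "finite X" and finI: "finite I"
    and sub: "\<And>i. i \<in> I \<Longrightarrow> subspace X m (E i)"
    and std: "\<And>i j. i \<in> I \<Longrightarrow> j \<in> I \<Longrightarrow> i \<noteq> j \<Longrightarrow> standard_pair (E i) (E j)"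
    and e: "\<And>i. i \<in> I \<Longrightarrow> e i \<in> E i" and B: "supp_le (sum e I) B"
  obtains e' where "\<And>i. i \<in> I \<Longrightarrow> e' i \<in> E i" "\<And>i. i \<in> I \<Longrightarrow> supp_le (e' i) B" "sum e' I = sum e I"
proof -
  have "\<exists>e'. (\<forall>i\<in>I. e' i \<in> E i \<and> supp_le (e' i) B) \<and> sum e' I = sum e I"
  proof (cases "\<exists>i\<in>I. e i \<noteq> 0")
    case True
    then obtain M where M: "M \<in> words X m" "\<And>i. i \<in> I \<Longrightarrow> supp_le (e i) M"
      using common_leading_word[where f=e and m=m and I=I, OF fin] sub e subspace_imp_vecs by metis
    moreover have "(\<forall>i\<in>I. e i \<in> E i \<and> supp_le (e i) M) \<and> supp_le (sum e I) B" using M e B by simp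
    ultimately show ?thesis
      using sum_family_bounded_decomp_below[where E=E and I=I and B=B, OF fin finI sub std M(1)] by blast
  qed (use e in \<open>auto intro!: exI[of _ e]\<close>)
  then show ?thesis using that by blast
qed

definition sum_family :: "(nat \<Rightarrow> ('x list \<Rightarrow> 'k::field) set) \<Rightarrow> nat set \<Rightarrow> ('x list \<Rightarrow> 'k) set" where
  "sum_family E I = {u. \<exists>e. (\<forall>i\<in>I. e i \<in> E i) \<and> u = sum e I}"

lemma subspace_sum_family:
  assumes finI: "finite I" and sub: "\<And>i. i \<in> I \<Longrightarrow> subspace X m (E i)"
  shows "subspace X m (sum_family E I)"
  unfolding subspace_def
proof (intro conjI ballI allI)
  show "sum_family E I \<subseteq> vecs X m"
    using sub by (auto simp: sum_family_def intro!: subspace_sum[OF subspace_vecs finI] subspace_imp_vecs)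
  show "0 \<in> sum_family E I"
    using sub subspace_0 unfolding sum_family_def by (intro CollectI exI[of _ "\<lambda>i. 0"]) auto
next
  fix u v assume "u \<in> sum_family E I" "v \<in> sum_family E I"
  then obtain e1 e2 where "\<forall>i\<in>I. e1 i \<in> E i" "u = sum e1 I" "\<forall>i\<in>I. e2 i \<in> E i" "v = sum e2 I"
    by (auto simp: sum_family_def)
  then show "u + v \<in> sum_family E I"
    unfolding sum_family_def
    by (intro CollectI exI[of _ "\<lambda>i. e1 i + e2 i"]) (auto simp: sum.distrib intro: subspace_add[OF sub])
next
  fix c v assume "v \<in> sum_family E I"
  then obtain e where "\<forall>i\<in>I. e i \<in> E i" "v = sum e I" by (auto simp: sum_family_def)
  then show "scale c v \<in> sum_family E I"
    unfolding sum_family_def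
    by (intro CollectI exI[of _ "\<lambda>i. scale c (e i)"])
      (auto simp: fun_eq_iff sum_fun_apply sum_distrib_left intro: subspace_scale[OF sub])
qed

lemma sum_family_singleton: "sum_family E {i} = E i"
  unfolding sum_family_def by force

lemma in_sum_family_single: "i \<in> I \<Longrightarrow> \<forall>j\<in>I. 0 \<in> E j \<Longrightarrow> finite I \<Longrightarrow> v \<in> E i \<Longrightarrow> v \<in> sum_family E I"
  unfolding sum_family_def
  by (intro CollectI exI[of _ "\<lambda>j. if j = i then v else 0"]) (auto simp: sum.delta)

lemma ssum_sum_family_insert:
  assumes finI: "finite I" and iI: "i \<notin> I"
  shows "ssum (E i) (sum_family E I) = sum_family E (insert i I)"
proof
  show "ssum (E i) (sum_family E I) \<subseteq> sum_family E (insert i I)"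
  proof
    fix v assume "v \<in> ssum (E i) (sum_family E I)"
    then obtain a e where "a \<in> E i" "\<forall>j\<in>I. e j \<in> E j" "v = (\<lambda>w. a w + sum e I w)"
      by (auto simp: ssum_def sum_family_def)
    moreover have "sum (e(i := a)) I = sum e I" using iI by (intro sum.cong) auto
    ultimately show "v \<in> sum_family E (insert i I)"
      unfolding sum_family_def using finI iI
      by (intro CollectI exI[of _ "e(i := a)"]) (auto simp: plus_fun_def)
  qed
  show "sum_family E (insert i I) \<subseteq> ssum (E i) (sum_family E I)"
  proof
    fix v assume "v \<in> sum_family E (insert i I)"
    then obtain e where e: "\<forall>j\<in>insert i I. e j \<in> E j" "v = sum e (insert i I)"
      by (auto simp: sum_family_def)
    then have "v = (\<lambda>w. e i w + sum e I w)" using finI iI by (simp add: plus_fun_def)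
    moreover have "sum e I \<in> sum_family E I" using e(1) unfolding sum_family_def by auto
    ultimately show "v \<in> ssum (E i) (sum_family E I)" using e(1) unfolding ssum_def by blast
  qed
qed

context finite_reduced_presentation
begin

lemma ker_wedges_Sop:
  assumes "xs \<noteq> []" "distinct xs" "\<forall>i\<in>set xs. i + N \<le> m"
  shows "ker X m (wedges X m (map (Sop X N R m) xs)) = sum_family (Rtens m) (set xs)"
  using assms
proof (induction xs rule: induct_list012)
  case (2 i)
  then show ?case using ker_Sop by (simp add: sum_family_singleton)
next
  case (3 i j xs)
  let ?I = "set (j # xs)"
  have sub: "subspace X m (sum_family (Rtens m) (insert i ?I))"
    using "3.prems"(3) by (intro subspace_sum_family) (auto intro: subspace_Rtens)
  have "wedges X m (map (Sop X N R m) (i # j # xs))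
      = theta_inv X m (ssum (Rtens m i) (sum_family (Rtens m) ?I))"
    using 3 by (simp add: wedge_def ker_Sop)
  also have "ssum (Rtens m i) (sum_family (Rtens m) ?I) = sum_family (Rtens m) (insert i ?I)"
    using "3.prems"(2) by (intro ssum_sum_family_insert) auto
  finally show ?case using ker_theta_inv[OF finite_X sub] by simp
qed simp

lemma alt_apply_Sop_supp_le:
  assumes "v \<in> vecs X m" "supp_le v B"
  shows "supp_le (alt_apply X m (Sop X N R m j) (Sop X N R m i) k v) B"
  using assms by (induction k) (auto intro: supp_le_mapply_Sop)

text \<open>Each application of \<open>S\<^sub>i\<^sup>(\<^sup>m\<^sup>)\<close> changes a vector by an element of \<open>Rtens m i\<close> without
  raising its leading word.\<close>

lemma alt_apply_Sop_telescope:
  assumes im: "i + N \<le> m" and jm: "j + N \<le> m" and v: "v \<in> vecs X m" and B: "supp_le v B"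
  shows "\<exists>p q. p \<in> Rtens m i \<and> q \<in> Rtens m j \<and> supp_le p B \<and> supp_le q B
     \<and> v = alt_apply X m (Sop X N R m j) (Sop X N R m i) k v + p + q"
proof (induction k)
  case 0
  show ?case using subspace_0[OF subspace_Rtens[OF im]] subspace_0[OF subspace_Rtens[OF jm]]
    by (metis add.right_neutral alt_apply.simps(1) supp_le_0)
next
  case (Suc k)
  let ?y = "alt_apply X m (Sop X N R m j) (Sop X N R m i) k v"
  obtain p q where pq: "p \<in> Rtens m i" "q \<in> Rtens m j" "supp_le p B" "supp_le q B" "v = ?y + p + q"
    using Suc.IH by blast
  have y: "?y \<in> vecs X m" "supp_le ?y B" using alt_apply_vecs[OF v] alt_apply_Sop_supp_le[OF v B] by auto
  show ?case
  proof (cases "even k")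
    case True
    let ?d = "?y - mapply X m (Sop X N R m i) ?y"
    have "?d \<in> Rtens m i" "supp_le ?d B"
      using diff_mapply_Sop_Rtens[OF im y(1)] by (auto intro: supp_le_diff y(2) supp_le_mapply_Sop)
    moreover have "v = alt_apply X m (Sop X N R m j) (Sop X N R m i) (Suc k) v + (p + ?d) + q"
      using pq(5) True by (simp add: fun_eq_iff algebra_simps)
    ultimately show ?thesis
      using pq subspace_add[OF subspace_Rtens[OF im]] supp_le_add by blast
  next
    case False
    let ?d = "?y - mapply X m (Sop X N R m j) ?y"
    have "?d \<in> Rtens m j" "supp_le ?d B"
      using diff_mapply_Sop_Rtens[OF jm y(1)] by (auto intro: supp_le_diff y(2) supp_le_mapply_Sop)
    moreover have "v = alt_apply X m (Sop X N R m j) (Sop X N R m i) (Suc k) v + p + (q + ?d)"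
      using pq(5) False by (simp add: fun_eq_iff algebra_simps)
    ultimately show ?thesis
      using pq subspace_add[OF subspace_Rtens[OF jm]] supp_le_add by blast
  qed
qed

lemma alt_apply_Sop_Rtens:
  assumes im: "i + N \<le> m" and v: "v \<in> Rtens m i"
  shows "alt_apply X m t (Sop X N R m i) (Suc k) v = 0"
proof (induction k)
  case 0
  show ?case using mapply_Sop_eq_0_iff[OF im Rtens_vecs[OF im v]] v by simp
next
  case (Suc k)
  show ?case by (simp only: alt_apply.simps(2)[of X m t _ "Suc k"] Suc.IH mapply_0)
qed

text \<open>Side-confluence for the overlap \<open>d\<close>, transported to the factors \<open>i\<close> and \<open>i + d\<close> of
  \<open>V\<^sup>\<otimes>\<^sup>m\<close> slice by slice.\<close>

lemma side_confluent_alt_apply_Sop: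
  assumes sc: "side_confluent X N R" and d: "1 \<le> d" "d \<le> N - 1" and im: "i + d + N \<le> m"
  obtains k where "k \<ge> 1" "\<And>v. v \<in> vecs X m \<Longrightarrow>
    alt_apply X m (Sop X N R m (i + d)) (Sop X N R m i) k v
      = alt_apply X m (Sop X N R m i) (Sop X N R m (i + d)) k v"
proof -
  let ?S = "Smat X N R" and ?L = "N + d"
  let ?t = "Sop X N R m (i + d)" and ?s = "Sop X N R m i"
  obtain k where k: "k \<ge> 1" and br: "braid X ?L (opmid X N d ?S 0) (opmid X N 0 ?S d) k
      = braid X ?L (opmid X N 0 ?S d) (opmid X N d ?S 0) k"
    using sc d unfolding side_confluent_def by blast
  have local: "alt_apply X ?L (Sop X N R ?L d) (Sop X N R ?L 0) k z
      = alt_apply X ?L (Sop X N R ?L 0) (Sop X N R ?L d) k z" if "z \<in> vecs X ?L" for z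
    using mapply_braid[OF finite_X that, of "opmid X N d ?S 0" "opmid X N 0 ?S d" k]
      mapply_braid[OF finite_X that, of "opmid X N 0 ?S d" "opmid X N d ?S 0" k] br
    by (simp add: Sop_def)
  define q0 where "q0 = m - N - d - i"
  have mq: "m = i + ?L + q0" using im by (simp add: q0_def)
  have sl: "slice (mapply X m ?t y) a b = mapply X ?L (Sop X N R ?L d) (slice y a b)"
    "slice (mapply X m ?s y) a b = mapply X ?L (Sop X N R ?L 0) (slice y a b)"
    if "a \<in> words X i" "b \<in> words X q0" for a b y
    using slice_mapply_Sop_shift[OF _ _ mq that, of "i + d" y]
      slice_mapply_Sop_shift[OF _ _ mq that, of i y] by simp_all
  have "alt_apply X m ?t ?s k v = alt_apply X m ?s ?t k v" if v: "v \<in> vecs X m" for v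
  proof (rule vecs_eqI_slices[OF finite_X mq alt_apply_vecs[OF v] alt_apply_vecs[OF v]])
    fix a b assume ab: "a \<in> words X i" "b \<in> words X q0"
    have "slice (alt_apply X m ?t ?s k v) a b
        = alt_apply X ?L (Sop X N R ?L d) (Sop X N R ?L 0) k (slice v a b)"
      by (rule slice_alt_apply) (use sl[OF ab] in auto)
    also have "\<dots> = alt_apply X ?L (Sop X N R ?L 0) (Sop X N R ?L d) k (slice v a b)"
      by (rule local) (rule slice_vecs[OF v mq ab])
    also have "\<dots> = slice (alt_apply X m ?s ?t k v) a b"
      by (rule slice_alt_apply[symmetric]) (use sl[OF ab] in auto)
    finally show "slice (alt_apply X m ?t ?s k v) a b = slice (alt_apply X m ?s ?t k v) a b" .
  qed
  then show ?thesis by (rule that[OF k])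
qed

text \<open>Both alternating products of \<open>S\<^sub>i\<^sup>(\<^sup>m\<^sup>)\<close> and \<open>S\<^sub>i\<^sub>+\<^sub>d\<^sup>(\<^sup>m\<^sup>)\<close> agree, so one of them kills
  \<open>e\<^sub>1 + e\<^sub>2\<close>, and the telescoping sum bounds the pieces.\<close>

lemma Rtens_pair_bounded_decomp:
  assumes sc: "side_confluent X N R" and d: "1 \<le> d" "d \<le> N - 1" and im: "i + d + N \<le> m"
    and e1: "e1 \<in> Rtens m i" and e2: "e2 \<in> Rtens m (i + d)" and B: "supp_le (e1 + e2) B"
  shows "\<exists>p q. p \<in> Rtens m i \<and> q \<in> Rtens m (i + d) \<and> e1 + e2 = p + q \<and> supp_le p B \<and> supp_le q B"
proof -
  let ?t = "Sop X N R m (i + d)" and ?s = "Sop X N R m i"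
  have im1: "i + N \<le> m" using im by simp
  obtain k where k: "k \<ge> 1"
    and comm: "\<And>v. v \<in> vecs X m \<Longrightarrow> alt_apply X m ?t ?s k v = alt_apply X m ?s ?t k v"
    using side_confluent_alt_apply_Sop[OF sc d im] by blast
  obtain k' where k': "k = Suc k'" using k by (cases k) auto
  have "alt_apply X m ?t ?s k (e1 + e2) = alt_apply X m ?t ?s k e1 + alt_apply X m ?s ?t k e2"
    by (simp add: alt_apply_add comm[OF Rtens_vecs[OF im e2]])
  also have "\<dots> = 0" using alt_apply_Sop_Rtens[OF im1 e1] alt_apply_Sop_Rtens[OF im e2] k' by simp
  finally have "alt_apply X m ?t ?s k (e1 + e2) = 0" .
  moreover obtain p q where "p \<in> Rtens m i" "q \<in> Rtens m (i + d)" "supp_le p B" "supp_le q B"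
    "e1 + e2 = alt_apply X m ?t ?s k (e1 + e2) + p + q"
    using alt_apply_Sop_telescope[OF im1 im vecs_add[OF Rtens_vecs[OF im1 e1] Rtens_vecs[OF im e2]] B]
    by blast
  ultimately show ?thesis by (intro exI[of _ p] exI[of _ q]) simp
qed

lemma standard_pair_Rtens:
  assumes sc: "side_confluent X N R" and ne: "i \<noteq> j" and im: "i + N \<le> m" and jm: "j + N \<le> m"
    and close: "i \<le> j + (N - 1)" "j \<le> i + (N - 1)"
  shows "standard_pair (Rtens m i) (Rtens m j)"
proof -
  have near: "standard_pair (Rtens m i) (Rtens m (i + d))"
    if d: "1 \<le> d" "d \<le> N - 1" and im: "i + d + N \<le> m" for i d
    unfolding standard_pair_def
  proof (intro ballI allI impI)
    fix e1 e2 M assume e: "e1 \<in> Rtens m i" "e2 \<in> Rtens m (i + d)" and M: "supp_lt (e1 + e2) M"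
    have im1: "i + N \<le> m" using im by simp
    have sum: "e1 + e2 \<in> vecs X m" using e Rtens_vecs im im1 vecs_add by (metis add.right_neutral)
    show "\<exists>p\<in>Rtens m i. \<exists>q\<in>Rtens m (i + d). e1 + e2 = p + q \<and> supp_lt p M \<and> supp_lt q M"
    proof (cases "e1 + e2 = 0")
      case True
      then show ?thesis
        using subspace_0[OF subspace_Rtens[OF im1]] subspace_0[OF subspace_Rtens[OF im]]
        by (metis add.right_neutral supp_lt_0)
    next
      case False
      then obtain B where "e1 + e2 \<noteq> 0" "B \<in> words X m" "(e1 + e2) B \<noteq> 0" "supp_le (e1 + e2) B"
        using vecs_leading_word[OF finite_X sum] by blast
      then have "B < M" using M by (auto simp: supp_lt_def)
      then show ?thesis
        using Rtens_pair_bounded_decomp[OF sc d im e \<open>supp_le (e1 + e2) B\<close>]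
        by (blast intro: supp_le_less_trans)
    qed
  qed
  show ?thesis
  proof (cases "i < j")
    case True
    then show ?thesis using near[of "j - i" i] close jm by simp
  next
    case False
    then show ?thesis using near[of "i - j" j] close im ne by (simp add: standard_pair_commute)
  qed
qed

end

context finite_reduced_presentation
begin

lemma slice_Rtens_Int:
  assumes pm: "p + k + N \<le> m" and x1: "x \<in> Rtens m p" and x2: "x \<in> Rtens m (p + k)"
    and a: "a \<in> words X p" and b: "b \<in> words X (m - N - p - k)"
  shows "slice x a b \<in> tens X k (Rbar X R) 0 \<inter> tens X 0 (Rbar X R) k"
proof -
  let ?Rb = "Rbar X R" and ?y = "slice x a b"
  have xv: "x \<in> vecs X m" and sl1: "\<forall>a\<in>words X p. \<forall>b\<in>words X (m - N - p). slice x a b \<in> ?Rb"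
    using x1 Rtens_eq_slices[of p m] pm by auto
  have sl2: "\<forall>a\<in>words X (p + k). \<forall>b\<in>words X (m - N - (p + k)). slice x a b \<in> ?Rb"
    using x2 Rtens_eq_slices[of "p + k" m] pm by auto
  have mq: "m = p + (N + k) + (m - N - p - k)" using pm by simp
  have yv: "?y \<in> vecs X (N + k)" using slice_vecs[OF xv mq a b] .
  have "slice ?y c [] \<in> ?Rb" if "c \<in> words X k" for c
  proof -
    have "a @ c \<in> words X (p + k)" using that a by (auto simp: in_words)
    moreover have "b \<in> words X (m - N - (p + k))" using b by (metis diff_diff_left)
    ultimately show ?thesis using sl2 by (simp add: slice_slice del: append_in_words)
  qed
  then have "?y \<in> tens X k ?Rb 0"
    using yv tens_eq_slices[OF finite_X subspace_Rbar, of "N + k" k 0] by (auto simp: words_0)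
  moreover have "slice ?y [] c \<in> ?Rb" if "c \<in> words X k" for c
  proof -
    have "c @ b \<in> words X (m - N - p)" using that b pm by (auto simp: in_words)
    then show ?thesis using sl1 a by (simp add: slice_slice del: append_in_words)
  qed
  then have "?y \<in> tens X 0 ?Rb k"
    using yv tens_eq_slices[OF finite_X subspace_Rbar, of "N + k" 0 k] by (auto simp: words_0)
  ultimately show ?thesis by blast
qed

end

section \<open>Extra-confluence\<close>

locale extra_confluent_presentation = finite_reduced_presentation +
  assumes extra_confluent: "extra_confluent X N R"
begin

lemma side_confluent: "side_confluent X N R"
  using extra_confluent by (simp add: extra_confluent_def)

lemma Rtens_extra_confluent_step:
  assumes k: "2 \<le> k" "k \<le> N - 1" and pm: "p + k + N \<le> m"
    and x1: "x \<in> Rtens m p" and x2: "x \<in> Rtens m (p + k)"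
  shows "x \<in> Rtens m (p + k - 1)"
proof -
  let ?Rb = "Rbar X R"
  have ext: "tens X k ?Rb 0 \<inter> tens X 0 ?Rb k \<subseteq> tens X (k - 1) ?Rb 1"
    using extra_confluent k by (simp add: extra_confluent_def)
  have "slice x A B \<in> ?Rb" if A: "A \<in> words X (p + k - 1)" and B: "B \<in> words X (m - N - (p + k - 1))" for A B
  proof -
    define a c d b where "a = take p A" "c = drop p A" "d = take 1 B" "b = drop 1 B"
    have a: "a \<in> words X p" and c: "c \<in> words X (k - 1)"
      using A k unfolding a_c_d_b_def by (auto simp: in_words dest: in_set_takeD in_set_dropD)
    have d: "d \<in> words X 1" and b: "b \<in> words X (m - N - p - k)"
      using B k pm unfolding a_c_d_b_def by (auto simp: in_words dest: in_set_takeD in_set_dropD)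
    have "slice x a b \<in> tens X (k - 1) ?Rb 1" using ext slice_Rtens_Int[OF pm x1 x2 a b] by blast
    then have "slice (slice x a b) c d \<in> ?Rb"
      using tens_eq_slices[OF finite_X subspace_Rbar, of "N + k" "k - 1" 1] k c d by auto
    then show ?thesis by (simp add: slice_slice a_c_d_b_def)
  qed
  then show ?thesis using Rtens_eq_slices[of "p + k - 1" m] pm Rtens_vecs[of p m x] x1 by auto
qed

lemma Rtens_interval:
  assumes d: "d \<le> N - 1" and am: "a + d + N \<le> m"
    and x1: "x \<in> Rtens m a" and x2: "x \<in> Rtens m (a + d)" and k: "k \<le> d"
  shows "x \<in> Rtens m (a + k)"
  using d am x2 k
proof (induction d)
  case (Suc d)
  show ?case
  proof (cases "k = Suc d")
    case False
    have "x \<in> Rtens m (a + d)"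
    proof (cases d)
      case 0
      then show ?thesis using x1 by simp
    next
      case (Suc d')
      then show ?thesis
        using Rtens_extra_confluent_step[of "Suc d" a m x] "Suc.prems" x1 by simp
    qed
    then show ?thesis using Suc.IH "Suc.prems" False by simp
  qed (use "Suc.prems" in simp)
qed (use x1 in simp)

text \<open>The element of \<open>Rtens m i \<inter> Rtens m j\<close> with leading word \<open>w\<close>, built from the two
  reductions of \<open>w\<close>, lies in \<open>Rtens m (j - 1)\<close> by extra-confluence.\<close>

lemma reducible_at_pred:
  assumes ij: "i < j" "2 \<le> j - i" "j - i \<le> N - 1" and jm: "j + N \<le> m"
    and w: "w \<in> words X m" and ri: "reducible_at i w" and rj: "reducible_at j w"
  shows "reducible_at (j - 1) w"
proof -
  have im: "i + N \<le> m" using ij jm by simp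
  let ?gi = "word_vec w - mapply X m (Sop X N R m i) (word_vec w)"
  let ?gj = "word_vec w - mapply X m (Sop X N R m j) (word_vec w)"
  note gi = reducible_at_Rtens_elem[OF im w ri] and gj = reducible_at_Rtens_elem[OF jm w rj]
  have mgj: "- ?gj \<in> Rtens m j" by (rule subspace_uminus[OF subspace_Rtens[OF jm] gj(1)])
  have "supp_le (?gi + - ?gj) w" by (intro supp_le_add supp_le_uminus gi(3) gj(3))
  moreover have "(?gi + - ?gj) w = 0" by (simp only: plus_fun_apply uminus_apply gi(2) gj(2)) simp
  ultimately have "supp_lt (?gi + - ?gj) w" by (rule supp_le_imp_lt)
  moreover have "standard_pair (Rtens m i) (Rtens m j)"
    using ij by (intro standard_pair_Rtens[OF side_confluent _ im jm]) auto
  ultimately obtain p q where pq: "p \<in> Rtens m i" "q \<in> Rtens m j" "?gi + - ?gj = p + q"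
    "supp_lt p w" "supp_lt q w"
    using gi(1) mgj unfolding standard_pair_def by blast
  let ?v = "?gi - p"
  have "?v \<in> Rtens m i" by (rule subspace_diff[OF subspace_Rtens[OF im] gi(1) pq(1)])
  moreover have "?v = ?gj + q" using pq(3) by (simp add: fun_eq_iff algebra_simps)
  then have "?v \<in> Rtens m j" using subspace_add[OF subspace_Rtens[OF jm] gj(1) pq(2)] by metis
  ultimately have "?v \<in> Rtens m (j - 1)"
    using Rtens_extra_confluent_step[of "j - i" i m ?v] ij jm by simp
  moreover have "p w = 0" using pq(4) by (auto simp: supp_lt_def)
  then have "?v w \<noteq> 0" using gi(2) by simp
  moreover have "supp_le ?v w" by (intro supp_le_diff gi(3) supp_lt_imp_le pq(4))
  ultimately show ?thesis using Rtens_leading_word_reducible[of "j - 1" m ?v w] jm w by simp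
qed

lemma sum_family_leading_word_reducible:
  assumes finI: "finite I" and Im: "\<And>i. i \<in> I \<Longrightarrow> i + N \<le> m"
    and width: "\<And>i j. i \<in> I \<Longrightarrow> j \<in> I \<Longrightarrow> i \<le> j + (N - 1)"
    and z: "z \<in> sum_family (Rtens m) I" and w: "w \<in> words X m" "z w \<noteq> 0" "supp_le z w"
  obtains i where "i \<in> I" "reducible_at i w"
proof -
  obtain e where e: "\<And>i. i \<in> I \<Longrightarrow> e i \<in> Rtens m i" "z = sum e I"
    using z by (auto simp: sum_family_def)
  obtain e' where e': "\<And>i. i \<in> I \<Longrightarrow> e' i \<in> Rtens m i" "\<And>i. i \<in> I \<Longrightarrow> supp_le (e' i) w"
    and sum_e': "sum e' I = sum e I"
  proof (rule sum_family_bounded_decomp[OF finite_X finI])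
    show "subspace X m (Rtens m i)" if "i \<in> I" for i using subspace_Rtens Im that by blast
    show "standard_pair (Rtens m i) (Rtens m j)" if "i \<in> I" "j \<in> I" "i \<noteq> j" for i j
      using standard_pair_Rtens[OF side_confluent] Im width that by blast
  qed (use e w in auto)
  have "(\<Sum>i\<in>I. e' i w) \<noteq> 0" using w(2) e(2) sum_e' by (simp add: sum_fun_apply[symmetric])
  then obtain i where "i \<in> I" "e' i w \<noteq> 0" by (meson sum.not_neutral_contains_not_neutral)
  then show ?thesis
    using that Rtens_leading_word_reducible[OF Im e'(1)] w(1) e'(2) by blast
qed

text \<open>\<open>S\<^sub>a\<^sup>(\<^sup>m\<^sup>) x = (S\<^sub>a\<^sup>(\<^sup>m\<^sup>) x - x) + x\<close> is a bounded sum in \<open>Rtens m a + Rtens m (a + d)\<close>, and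
  the first summand cannot reach \<open>w\<close>, which is not reducible at \<open>a\<close>.\<close>

lemma leading_word_mapply_Sop_reducible:
  assumes d: "1 \<le> d" "d \<le> N - 1" and am: "a + d + N \<le> m" and x: "x \<in> Rtens m (a + d)"
    and w: "w \<in> words X m" "mapply X m (Sop X N R m a) x w \<noteq> 0"
      "supp_le (mapply X m (Sop X N R m a) x) w"
  shows "reducible_at (a + d) w"
proof -
  have im: "a + N \<le> m" using am by simp
  let ?z = "mapply X m (Sop X N R m a) x"
  let ?dz = "x - ?z"
  have nra: "\<not> reducible_at a w" using mapply_Sop_reducible[OF im] w(2) by blast
  have mdz: "- ?dz \<in> Rtens m a"
    by (rule subspace_uminus[OF subspace_Rtens[OF im] diff_mapply_Sop_Rtens[OF im Rtens_vecs[OF am x]]])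
  have zeq: "- ?dz + x = ?z" by simp
  have "supp_le (- ?dz + x) w" unfolding zeq by (rule w(3))
  then obtain p q where pq: "p \<in> Rtens m a" "q \<in> Rtens m (a + d)" "- ?dz + x = p + q"
    "supp_le p w" "supp_le q w"
    using Rtens_pair_bounded_decomp[OF side_confluent d am mdz x] by blast
  have "p w = 0" using Rtens_leading_word_reducible[OF im pq(1) w(1) _ pq(4)] nra by blast
  moreover have "?z = p + q" using pq(3) unfolding zeq .
  ultimately have "q w \<noteq> 0" using w(2) by simp
  then show ?thesis using Rtens_leading_word_reducible[OF am pq(2) w(1) _ pq(5)] by blast
qed

text \<open>If \<open>x \<notin> Rtens m a\<close>, a leading word of \<open>S\<^sub>a\<^sup>(\<^sup>m\<^sup>) x\<close> is reducible at \<open>a + 1\<close> and at some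
  \<open>i < a\<close> of the window, hence at \<open>a\<close>, which \<open>S\<^sub>a\<^sup>(\<^sup>m\<^sup>)\<close> excludes.\<close>

lemma Rtens_from_window:
  assumes N2: "2 \<le> N" and am: "a + 1 + N \<le> m"
    and x1: "x \<in> sum_family (Rtens m) {a + 2 - N..a}" and x2: "x \<in> Rtens m (a + 1)"
  shows "x \<in> Rtens m a"
proof (rule ccontr)
  assume nx: "x \<notin> Rtens m a"
  let ?I = "{a + 2 - N..a}"
  have im: "a + N \<le> m" using am by simp
  have Im: "i + N \<le> m" if "i \<in> ?I" for i using that am by auto
  have xv: "x \<in> vecs X m" using Rtens_vecs[OF am x2] .
  let ?z = "mapply X m (Sop X N R m a) x"
  have "?z \<noteq> 0" using mapply_Sop_eq_0_iff[OF im xv] nx by simp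
  then obtain w where w: "w \<in> words X m" "?z w \<noteq> 0" "supp_le ?z w"
    using vecs_leading_word[OF finite_X mapply_vecs] by blast
  have nra: "\<not> reducible_at a w" using mapply_Sop_reducible[OF im] w(2) by blast
  have ra1: "reducible_at (a + 1) w"
    using leading_word_mapply_Sop_reducible[of 1 a m x w] N2 am x2 w by simp
  have sub: "subspace X m (sum_family (Rtens m) ?I)"
    using Im by (intro subspace_sum_family) (auto intro: subspace_Rtens)
  have "x - ?z \<in> sum_family (Rtens m) ?I"
    using diff_mapply_Sop_Rtens[OF im xv] N2 Im subspace_0[OF subspace_Rtens]
    by (intro in_sum_family_single) auto
  from subspace_diff[OF sub x1 this] have "?z \<in> sum_family (Rtens m) ?I" by simp
  moreover have "i \<le> j + (N - 1)" if "i \<in> ?I" "j \<in> ?I" for i j using that by auto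
  ultimately obtain i where i: "i \<in> ?I" "reducible_at i w"
    using sum_family_leading_word_reducible[OF finite_atLeastAtMost Im _ _ w] by blast
  then have "i \<noteq> a" using nra by blast
  then have "reducible_at (a + 1 - 1) w"
    using reducible_at_pred[OF _ _ _ am w(1) i(2) ra1] i N2 by auto
  then show False using nra by simp
qed

end

section \<open>The spaces \<open>V\<^sup>\<otimes>\<^sup>p \<otimes> J\<^sub>n\<close>\<close>

lemma lN_ge: "2 \<le> n \<Longrightarrow> N \<le> lN N n"
proof -
  assume "2 \<le> n"
  then have "1 \<le> n div 2" by simp
  then have "N \<le> n div 2 * N" by simp
  then show ?thesis unfolding lN_def by linarith
qed

lemma lN_add_2: "lN N (n + 2) = lN N n + N"
  by (simp add: lN_def algebra_simps)

lemma lN_Suc_even: "even n \<Longrightarrow> lN N (n + 1) = lN N n + 1"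
  by (auto simp: lN_def elim!: evenE)

lemma lN_Suc_odd: "odd n \<Longrightarrow> lN N (n + 1) + 1 = lN N n + N"
  by (auto simp: lN_def elim!: oddE)

lemma ball_words_append:
  "(\<forall>a\<in>words X p. \<forall>a'\<in>words X i. P (a @ a')) \<longleftrightarrow> (\<forall>A\<in>words X (p + i). P A)"
proof (intro iffI ballI)
  fix A assume "\<forall>a\<in>words X p. \<forall>a'\<in>words X i. P (a @ a')" "A \<in> words X (p + i)"
  moreover have "take p A \<in> words X p" "drop p A \<in> words X i"
    using \<open>A \<in> words X (p + i)\<close> by (auto simp: in_words dest: in_set_takeD in_set_dropD)
  ultimately show "P A" by (metis append_take_drop_id)
qed (auto simp: in_words)

context finite_reduced_presentation
begin

definition Rtens_tail :: "nat \<Rightarrow> nat \<Rightarrow> ('x list \<Rightarrow> 'k) set" where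
  "Rtens_tail m a = {v \<in> vecs X m. \<forall>i. a \<le> i \<and> i \<le> m - N \<longrightarrow> v \<in> Rtens m i}"

lemma J_eq_slices:
  assumes n: "2 \<le> n"
  shows "J X N R n = {y \<in> vecs X (lN N n).
    \<forall>i \<le> lN N n - N. \<forall>a\<in>words X i. \<forall>b\<in>words X (lN N n - N - i). slice y a b \<in> Rbar X R}"
proof (cases "n = 2")
  case True
  then show ?thesis
    using subspace_imp_vecs[OF subspace_Rbar] by (auto simp: J_def lN_def words_0)
next
  case False
  then have "J X N R n = (\<Inter>i\<in>{0..lN N n - N}. tens X i (Rbar X R) (lN N n - N - i))"
    using n by (simp add: J_def)
  moreover have mem: "y \<in> tens X i (Rbar X R) (lN N n - N - i) \<longleftrightarrow> y \<in> vecs X (lN N n) \<and>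
      (\<forall>a\<in>words X i. \<forall>b\<in>words X (lN N n - N - i). slice y a b \<in> Rbar X R)"
    if "i \<le> lN N n - N" for i y
    using tens_eq_slices[OF finite_X subspace_Rbar, of "lN N n" i "lN N n - N - i"] that lN_ge[OF n, of N]
    by auto
  moreover have "y \<in> vecs X (lN N n)" if "\<forall>i\<in>{0..lN N n - N}. y \<in> tens X i (Rbar X R) (lN N n - N - i)" for y
    using that mem[of 0 y] by force
  ultimately show ?thesis by auto
qed

lemma subspace_J: "2 \<le> n \<Longrightarrow> subspace X (lN N n) (J X N R n)"
  using subspace_Rbar lN_ge[of n N]
  by (auto simp: J_def lN_def intro!: subspace_INT subspace_tens)

lemma tens_J_eq_Rtens_tail:
  assumes n: "2 \<le> n"
  shows "tens X p (J X N R n) 0 = Rtens_tail (p + lN N n) p"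
proof -
  let ?L = "lN N n" and ?q = "lN N n - N" and ?Rb = "Rbar X R"
  have LN: "N \<le> ?L" by (rule lN_ge[OF n])
  have "v \<in> tens X p (J X N R n) 0 \<longleftrightarrow> v \<in> Rtens_tail (p + ?L) p" if v: "v \<in> vecs X (p + ?L)" for v
  proof -
    let ?Q = "\<lambda>i A. \<forall>b\<in>words X (?q - i). slice v A b \<in> ?Rb"
    have "slice v a [] \<in> J X N R n \<longleftrightarrow> (\<forall>i \<le> ?q. \<forall>a'\<in>words X i. ?Q i (a @ a'))"
      if "a \<in> words X p" for a
      using slice_vecs[OF v _ that, of ?L 0 "[]"] by (simp add: J_eq_slices[OF n] slice_slice words_0)
    then have "v \<in> tens X p (J X N R n) 0 \<longleftrightarrow>
        (\<forall>a\<in>words X p. \<forall>i \<le> ?q. \<forall>a'\<in>words X i. ?Q i (a @ a'))"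
      using v tens_eq_slices[OF finite_X subspace_J[OF n], of "p + ?L" p 0] by (auto simp: words_0)
    also have "\<dots> \<longleftrightarrow> (\<forall>i \<le> ?q. \<forall>A\<in>words X (p + i). ?Q i A)"
      using ball_words_append[of X p _ "?Q _"] by blast
    also have "\<dots> \<longleftrightarrow> (\<forall>i \<le> ?q. v \<in> Rtens (p + ?L) (p + i))"
      using Rtens_eq_slices[of "p + _" "p + ?L"] LN v by (auto simp: add.assoc)
    also have "\<dots> \<longleftrightarrow> (\<forall>i. p \<le> i \<and> i \<le> p + ?L - N \<longrightarrow> v \<in> Rtens (p + ?L) i)"
    proof (intro iffI allI impI)
      fix i assume "\<forall>i \<le> ?q. v \<in> Rtens (p + ?L) (p + i)" and i: "p \<le> i \<and> i \<le> p + ?L - N"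
      moreover have "i = p + (i - p)" "i - p \<le> ?q" using i LN by auto
      ultimately show "v \<in> Rtens (p + ?L) i" by metis
    next
      fix i assume "\<forall>i. p \<le> i \<and> i \<le> p + ?L - N \<longrightarrow> v \<in> Rtens (p + ?L) i" "i \<le> ?q"
      moreover have "p \<le> p + i \<and> p + i \<le> p + ?L - N" using calculation(2) LN by linarith
      ultimately show "v \<in> Rtens (p + ?L) (p + i)" by blast
    qed
    finally show ?thesis using v by (simp add: Rtens_tail_def)
  qed
  moreover have "tens X p (J X N R n) 0 \<subseteq> vecs X (p + ?L)"
    using subspace_imp_vecs[OF subspace_tens[OF subspace_J[OF n], of "p + ?L" p 0]] by auto
  ultimately show ?thesis by (auto simp: Rtens_tail_def)
qed

lemma F2_eq_theta_inv_Rtens_tail: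
  assumes "1 \<le> n" "lN N (n + 1) \<le> m"
  shows "F2 X N R n m = theta_inv X m (Rtens_tail m (m - lN N (n + 1)))"
  using assms tens_J_eq_Rtens_tail[of "n + 1" "m - lN N (n + 1)"] by (simp add: F2_def)

lemma ker_F2:
  assumes "1 \<le> n" "lN N (n + 1) \<le> m"
  shows "ker X m (F2 X N R n m) = Rtens_tail m (m - lN N (n + 1))"
proof -
  have "subspace X m (Rtens_tail m (m - lN N (n + 1)))"
    using subspace_tens[OF subspace_J, of "n + 1" m "m - lN N (n + 1)" 0]
      tens_J_eq_Rtens_tail[of "n + 1" "m - lN N (n + 1)"] assms by simp
  then show ?thesis using ker_theta_inv[OF finite_X] F2_eq_theta_inv_Rtens_tail[OF assms] by simp
qed

end

section \<open>The intersection \<open>ker T\<^sub>n\<^sub>,\<^sub>m \<inter> ker F\<^sub>2\<^sup>n\<^sup>-\<^sup>1\<^sup>,\<^sup>m\<close>\<close>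

context extra_confluent_presentation
begin

lemma sum_family_window_Int_Rtens_tail:
  assumes N2: "2 \<le> N" and am: "a + 1 + N \<le> m"
  shows "sum_family (Rtens m) {a + 2 - N..a} \<inter> Rtens_tail m (a + 1) = Rtens_tail m a"
proof
  show "sum_family (Rtens m) {a + 2 - N..a} \<inter> Rtens_tail m (a + 1) \<subseteq> Rtens_tail m a"
  proof
    fix x assume x: "x \<in> sum_family (Rtens m) {a + 2 - N..a} \<inter> Rtens_tail m (a + 1)"
    then have "x \<in> Rtens m (a + 1)" using am by (auto simp: Rtens_tail_def)
    then have "x \<in> Rtens m a" using Rtens_from_window[OF N2 am] x by blast
    moreover have "i = a \<or> a + 1 \<le> i" if "a \<le> i" for i using that by auto
    ultimately show "x \<in> Rtens_tail m a" using x by (auto simp: Rtens_tail_def)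
  qed
  show "Rtens_tail m a \<subseteq> sum_family (Rtens m) {a + 2 - N..a} \<inter> Rtens_tail m (a + 1)"
  proof
    fix x assume x: "x \<in> Rtens_tail m a"
    then have "x \<in> Rtens m a" using am by (auto simp: Rtens_tail_def)
    then have "x \<in> sum_family (Rtens m) {a + 2 - N..a}"
      using am N2 subspace_0[OF subspace_Rtens] by (intro in_sum_family_single) auto
    then show "x \<in> sum_family (Rtens m) {a + 2 - N..a} \<inter> Rtens_tail m (a + 1)"
      using x by (auto simp: Rtens_tail_def)
  qed
qed

lemma Rtens_Int_Rtens_tail:
  assumes am: "a + (N - 1) + N \<le> m"
  shows "Rtens m a \<inter> Rtens_tail m (a + (N - 1)) = Rtens_tail m a"
proof
  show "Rtens m a \<inter> Rtens_tail m (a + (N - 1)) \<subseteq> Rtens_tail m a"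
  proof
    fix x assume x: "x \<in> Rtens m a \<inter> Rtens_tail m (a + (N - 1))"
    have "x \<in> Rtens m i" if "a \<le> i" "i \<le> m - N" for i
    proof (cases "i \<le> a + (N - 1)")
      case True
      then show ?thesis
        using Rtens_interval[of "N - 1" a m x "i - a"] x am that by (auto simp: Rtens_tail_def)
    qed (use x that in \<open>auto simp: Rtens_tail_def\<close>)
    then show "x \<in> Rtens_tail m a" using x by (auto simp: Rtens_tail_def)
  qed
qed (use am in \<open>auto simp: Rtens_tail_def\<close>)

lemma sum_family_Int_Rtens_tail:
  assumes N2: "2 \<le> N" and n: "2 \<le> n" and m: "lN N (n + 2) \<le> m"
  shows "sum_family (Rtens m) {m - lN N (n + 2) + 1..<m - lN N (n + 1) + 1}
      \<inter> Rtens_tail m (m - lN N n) = Rtens_tail m (m - lN N (n + 1))"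
proof -
  define a where "a = m - lN N (n + 1)"
  have LN: "N \<le> lN N n" and L2: "lN N (n + 2) = lN N n + N"
    using lN_ge[OF n] lN_add_2 by auto
  show ?thesis
  proof (cases "even n")
    case True
    then have L1: "lN N (n + 1) = lN N n + 1" by (rule lN_Suc_even)
    have I: "{m - lN N (n + 2) + 1..<a + 1} = {a + 2 - N..a}"
      and tail: "m - lN N n = a + 1" and am: "a + 1 + N \<le> m"
      using LN L1 L2 m N2 by (auto simp: a_def)
    show ?thesis
      unfolding a_def[symmetric] I tail by (rule sum_family_window_Int_Rtens_tail[OF N2 am])
  next
    case False
    then have L1: "lN N (n + 1) + 1 = lN N n + N" by (rule lN_Suc_odd)
    have I: "{m - lN N (n + 2) + 1..<a + 1} = {a}"
      and tail: "m - lN N n = a + (N - 1)" and am: "a + (N - 1) + N \<le> m"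
      using LN L1 L2 m N2 by (auto simp: a_def)
    show ?thesis
      unfolding a_def[symmetric] I tail sum_family_singleton by (rule Rtens_Int_Rtens_tail[OF am])
  qed
qed

end

theorem lemma4p3p3:
  fixes X :: "'x::linorder set" and R :: "('x list \<Rightarrow> 'k::field) set"
    and N n m :: nat
  assumes "N \<ge> 2"
    and "reduced_presentation X N R"
    and "extra_confluent X N R"
    and "n \<ge> 2"
    and "m \<ge> lN N (n + 2)"
  shows "vee X m
           (wedges X m (map (Sop X N R m) [m - lN N (n + 2) + 1 ..< m - lN N (n + 1) + 1]))
           (F2 X N R (n - 1) m)
         = F2 X N R n m"
proof -
  interpret extra_confluent_presentation X N R
    using assms(2,3) by unfold_locales (simp_all add: extra_confluent_def)
  have L: "lN N n + 1 \<le> lN N (n + 1)" "lN N (n + 1) < lN N (n + 2)" "N \<le> lN N (n + 1)"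
    using lN_ge[of n N] lN_ge[of "n + 1" N] lN_add_2[of N n] lN_Suc_even[of n N] lN_Suc_odd[of n N] assms
    by (cases "even n"; simp)+
  define lo hi where "lo = m - lN N (n + 2) + 1" and "hi = m - lN N (n + 1) + 1"
  have "ker X m (wedges X m (map (Sop X N R m) [lo..<hi])) = sum_family (Rtens m) {lo..<hi}"
    by (subst set_upt[symmetric], rule ker_wedges_Sop) (use L assms(5) in \<open>auto simp: lo_def hi_def\<close>)
  moreover have "ker X m (F2 X N R (n - 1) m) = Rtens_tail m (m - lN N n)"
    using ker_F2[of "n - 1" m] L assms(4,5) by simp
  ultimately show ?thesis
    using sum_family_Int_Rtens_tail[OF assms(1,4,5)] F2_eq_theta_inv_Rtens_tail[of n m] L assms(4,5)
    by (simp add: vee_def lo_def hi_def)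
qed

end
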